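(* Let $f:\mathcal{WH}^\circ\to\mathcal{WBH}^\circ$ be a homotopy equivalence with homotopy inverse $g:\mathcal{WBH}^\circ\to\mathcal{WH}^\circ$. Then $f(hf(\mathcal{WH}^\circ))\subset hf(\mathcal{WBH}^\circ)$ and $g(hf(\mathcal{WBH}^\circ))\subset hf(\mathcal{WH}^\circ)$. The same inclusions hold for any homotopy equivalence $f:\mathcal{WH}\to\mathcal{WBH}$ with homotopy inverse $g$.
   Context: $hf(X)$ is the set of points $x\in X$ with $h_t(x)=x$ for all $t$ for every homotopy $h_t:X\to X$ with $h_0=\mathrm{id}_X$. Double broom $\mathcal{B}\subset\mathbb{R}^2$: $v=(0,0)$, $a_0=(0,1)$, $b_0=(0,-1)$, $a_n=(1/n,0)$, $b_n=(-1/n,0)$ ($n\ge1$), $\mathcal{B}=[v,a_0]\cup[v,b_0]\cup\bigcup_{n\ge1}([a_n,a_0]\cup[b_n,b_0])$ with center $v$. Hairy disk $\mathcal{H}$: the closed unit disk $D^2$ with center $c$, a countable dense subset $M=\{m_i\}$ of $\partial D^2$, and for each $i$ a copy $\mathcal{B}_{m_i}$ of $\mathcal{B}$ attached by its center at $m_i$, pairwise disjoint, meeting $D^2$ only in $m_i$, diameters tending to $0$. For disjoint $X,Y\subset\mathbb{R}^N$, $X\curlyvee_{x,y}Y=X\cup[x,y]\cup Y$ with $[x,y]$ an arc from $x\in X$ to $y\in Y$ whose interior misses $X\cup Y$. With $c(k)=(-1/k,0,0)$ and $\mathcal{H}(k)$ a copy of $\mathcal{H}$ of diameter $1/k$ in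 the plane $\{x=-1/k\}$ centered at $c(k)$: $\mathcal{WH}^\circ=\mathcal{H}(1)\curlyvee_{c(1),c(2)}\mathcal{H}(2)\curlyvee_{c(2),c(3)}\cdots$, $\mathcal{WBH}^\circ=\mathcal{B}\curlyvee_{b,c'(1)}\mathcal{H}'(1)\curlyvee_{c'(1),c'(2)}\mathcal{H}'(2)\cdots$ (with $b$ the center of the extra broom, $\mathcal{H}'(k),c'(k)$ analogous factors), $\mathcal{WH}=\mathcal{WH}^\circ\cup\{(0,0,0)\}$, $\mathcal{WBH}=\mathcal{WBH}^\circ\cup\{(0,0,0)\}$. *)

theory Defs
  imports "HOL-Analysis.Analysis"
begin

definition hf :: "'a::topological_space set \<Rightarrow> 'a set" where
  "hf X = {x \<in> X. \<forall>h. (continuous_on ({0..1::real} \<times> X) h \<and> h ` ({0..1} \<times> X) \<subseteq> X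
                         \<and> (\<forall>y\<in>X. h (0, y) = y))
                      \<longrightarrow> (\<forall>t\<in>{0..1}. h (t, x) = x)}"

definition homotopy_equivalence_pair ::
  "'a::real_normed_vector set \<Rightarrow> 'b::real_normed_vector set \<Rightarrow> ('a \<Rightarrow> 'b) \<Rightarrow> ('b \<Rightarrow> 'a) \<Rightarrow> bool" where
  "homotopy_equivalence_pair X Y f g \<longleftrightarrow>
     continuous_on X f \<and> f ` X \<subseteq> Y \<and> continuous_on Y g \<and> g ` Y \<subseteq> X \<and>
     homotopic_with_canon (\<lambda>_. True) X X (g \<circ> f) id \<and>
     homotopic_with_canon (\<lambda>_. True) Y Y (f \<circ> g) id"

definition double_broom :: "(real \<times> real) set" where
  "double_broom =
     closed_segment (0,0) (0,1) \<union> closed_segment (0,0) (0,-1) \<union>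
     (\<Union>n\<in>{1::nat..}. closed_segment (1 / real n, 0) (0, 1) \<union> closed_segment (- 1 / real n, 0) (0, -1))"

text \<open>Hairy disk built from an enumeration m of the countable dense set M of the unit circle
  and embeddings e i of the double broom (center sent to m i).\<close>
definition hairy_disk :: "(nat \<Rightarrow> real \<times> real) \<Rightarrow> (nat \<Rightarrow> real \<times> real \<Rightarrow> real \<times> real) \<Rightarrow> (real \<times> real) set" where
  "hairy_disk m e = cball 0 1 \<union> (\<Union>i. e i ` double_broom)"

definition hairy_disk_data :: "(nat \<Rightarrow> real \<times> real) \<Rightarrow> (nat \<Rightarrow> real \<times> real \<Rightarrow> real \<times> real) \<Rightarrow> bool" where
  "hairy_disk_data m e \<longleftrightarrow>
     inj m \<and> range m \<subseteq> sphere 0 1 \<and> sphere 0 1 \<subseteq> closure (range m) \<and>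
     (\<forall>i. continuous_on double_broom (e i) \<and> inj_on (e i) double_broom) \<and>
     (\<forall>i. e i (0, 0) = m i) \<and>
     (\<forall>i j. i \<noteq> j \<longrightarrow> e i ` double_broom \<inter> e j ` double_broom = {}) \<and>
     (\<forall>i. e i ` double_broom \<inter> cball 0 1 = {m i}) \<and>
     ((\<lambda>i. diameter (e i ` double_broom)) \<longlonglongrightarrow> 0)"

definition cpt :: "nat \<Rightarrow> real \<times> real \<times> real" where
  "cpt k = (- 1 / real k, 0, 0)"

text \<open>H(k): the similar copy of H (center 0) of diameter 1/k in the plane x = -1/k, centered at c(k).\<close>
definition copyH :: "(real \<times> real) set \<Rightarrow> nat \<Rightarrow> real \<times> real \<Rightarrow> real \<times> real \<times> real" where
  "copyH H k p = (let s = 1 / (real k * diameter H) in (- 1 / real k, s * fst p, s * snd p))"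

definition WHo :: "(real \<times> real) set \<Rightarrow> (real \<times> real \<times> real) set" where
  "WHo H = (\<Union>k\<in>{1::nat..}. copyH H k ` H) \<union> (\<Union>k\<in>{1::nat..}. closed_segment (cpt k) (cpt (k + 1)))"

definition WBHo :: "(real \<times> real) set \<Rightarrow> (real \<times> real \<times> real) set" where
  "WBHo H = (\<lambda>p. (-2, fst p, snd p)) ` double_broom \<union> closed_segment (-2, 0, 0) (cpt 1) \<union> WHo H"

definition WH :: "(real \<times> real) set \<Rightarrow> (real \<times> real \<times> real) set" where
  "WH H = insert 0 (WHo H)"

definition WBH :: "(real \<times> real) set \<Rightarrow> (real \<times> real \<times> real) set" where
  "WBH H = insert 0 (WBHo H)"

end

theory Submission
  imports Defs
begin

text \<open>Call y locally collapsible in Y if some deformation of Y (a homotopy starting at the identity)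
  is constant near y at time 1. For a homotopy equivalence f with inverse g and a deformation k of Y,
  the maps g \<circ> k_s \<circ> f are homotopic to the identity of X, so they fix every point of hf X.
  Hence f maps a point of hf X that is a limit of hf X to a point that is not locally collapsible,
  and if f x is locally collapsible then some deformation of X collapses a neighbourhood of x onto x.

  In all four spaces every point outside hf is locally collapsible, because a local fold along a
  segment moves it. The points of hf are the boundary circles of the copies of the hairy disk, their
  limit 0, and (in the spaces with the extra broom) its center b. Circles and 0 are limits of hf.
  A broom center lies in hf: while it stays near its initial position, the feet a_n close to the
  center are trapped in their own bristles, which forces it onto the segment [v, a_0] and, by the
  symmetry of the double broom, onto v. For the same reason no deformation collapses a
  neighbourhood of b onto b.\<close>

section \<open>Homotopically fixed points under homotopy equivalences\<close>

definition deformation :: "'a::topological_space set \<Rightarrow> (real \<times> 'a \<Rightarrow> 'a) \<Rightarrow> bool" where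
  "deformation X h \<longleftrightarrow>
     continuous_on ({0..1} \<times> X) h \<and> h ` ({0..1} \<times> X) \<subseteq> X \<and> (\<forall>x\<in>X. h (0, x) = x)"

lemma hf_iff_deformation: "hf X = {x \<in> X. \<forall>h. deformation X h \<longrightarrow> (\<forall>t\<in>{0..1}. h (t, x) = x)}"
  unfolding hf_def deformation_def by auto

lemma hf_deformation_fixed: "x \<in> hf X \<Longrightarrow> deformation X h \<Longrightarrow> t \<in> {0..1} \<Longrightarrow> h (t, x) = x"
  unfolding hf_iff_deformation by auto

lemma hf_subset: "hf X \<subseteq> X"
  unfolding hf_def by auto

lemma homotopic_with_canon_True_iff:
  "homotopic_with_canon (\<lambda>_. True) X Y p q \<longleftrightarrow>
     (\<exists>H. continuous_on ({0..1::real} \<times> X) H \<and> H ` ({0..1} \<times> X) \<subseteq> Y \<and>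
          (\<forall>x\<in>X. H (0, x) = p x) \<and> (\<forall>x\<in>X. H (1, x) = q x))"
  by (subst homotopic_with) (auto simp: image_subset_iff_funcset)

lemma deformation_homotopic_id:
  assumes h: "deformation X h" and s: "s \<in> {0..1}"
  shows "homotopic_with_canon (\<lambda>_. True) X X id (\<lambda>x. h (s, x))"
  unfolding homotopic_with_canon_True_iff
proof (intro exI conjI ballI)
  have hc: "continuous_on ({0..1} \<times> X) h" and hX: "h ` ({0..1} \<times> X) \<subseteq> X"
    using h unfolding deformation_def by auto
  have sub: "(\<lambda>z. (s * fst z, snd z)) ` ({0..1} \<times> X) \<subseteq> {0..1} \<times> X"
    using s by (auto intro: mult_le_one)
  have "continuous_on ({0..1} \<times> X) (\<lambda>z. (s * fst z, snd z))"
    by (intro continuous_intros)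
  from continuous_on_compose[OF this continuous_on_subset[OF hc sub]]
  show "continuous_on ({0..1} \<times> X) (\<lambda>z. h (s * fst z, snd z))"
    by (simp add: comp_def)
  show "(\<lambda>z. h (s * fst z, snd z)) ` ({0..1} \<times> X) \<subseteq> X"
  proof (rule image_subsetI)
    fix z :: "real \<times> _" assume "z \<in> {0..1} \<times> X"
    then have "(s * fst z, snd z) \<in> {0..1} \<times> X" using sub by blast
    then show "h (s * fst z, snd z) \<in> X" using hX by blast
  qed
qed (use h in \<open>simp_all add: deformation_def\<close>)

lemma hf_fixed_by_homotopic_id:
  assumes x: "x \<in> hf X" and hom: "homotopic_with_canon (\<lambda>_. True) X X id \<phi>"
  shows "\<phi> x = x"
proof -
  obtain H where "continuous_on ({0..1::real} \<times> X) H" "H ` ({0..1} \<times> X) \<subseteq> X"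
    "\<forall>x\<in>X. H (0, x) = x" "\<forall>x\<in>X. H (1, x) = \<phi> x"
    using hom unfolding homotopic_with_canon_True_iff by auto
  then have "deformation X H" "H (1, x) = \<phi> x"
    using x hf_subset[of X] unfolding deformation_def by blast+
  then show ?thesis using hf_deformation_fixed[OF x] by fastforce
qed

lemma homotopy_equivalence_pair_sym:
  "homotopy_equivalence_pair X Y f g \<Longrightarrow> homotopy_equivalence_pair Y X g f"
  unfolding homotopy_equivalence_pair_def by auto

lemma homotopy_equivalence_pair_pullback_homotopic:
  assumes he: "homotopy_equivalence_pair X Y f g" and k: "deformation Y k" and s: "s \<in> {0..1}"
  shows "homotopic_with_canon (\<lambda>_. True) X X id (\<lambda>x. g (k (s, f x)))"
proof -
  from he have f: "continuous_on X f" "f ` X \<subseteq> Y" and g: "continuous_on Y g" "g ` Y \<subseteq> X"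
    and gf: "homotopic_with_canon (\<lambda>_. True) X X (g \<circ> f) id"
    unfolding homotopy_equivalence_pair_def by auto
  have "homotopic_with_canon (\<lambda>_. True) Y X (g \<circ> id) (g \<circ> (\<lambda>y. k (s, y)))"
    by (rule homotopic_with_compose_continuous_left[OF deformation_homotopic_id[OF k s] g(1)])
      (use g(2) in blast)
  then have "homotopic_with_canon (\<lambda>_. True) X X (g \<circ> id \<circ> f) (g \<circ> (\<lambda>y. k (s, y)) \<circ> f)"
    by (rule homotopic_with_compose_continuous_right[OF _ f(1)]) (use f(2) in blast)
  then show ?thesis
    using homotopic_with_trans[OF homotopic_with_symD[OF gf]] by (simp add: comp_def)
qed

lemma homotopy_equivalence_pair_hf_track:
  assumes "homotopy_equivalence_pair X Y f g" "deformation Y k" "x \<in> hf X" "s \<in> {0..1}"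
  shows "g (k (s, f x)) = x"
  using hf_fixed_by_homotopic_id homotopy_equivalence_pair_pullback_homotopic assms by metis

definition locally_collapsible :: "'a::topological_space set \<Rightarrow> 'a \<Rightarrow> bool" where
  "locally_collapsible Y y \<longleftrightarrow>
     (\<exists>h U. deformation Y h \<and> openin (top_of_set Y) U \<and> y \<in> U \<and> (\<forall>u\<in>U. h (1, u) = h (1, y)))"

definition collapsible_onto :: "'a::topological_space set \<Rightarrow> 'a \<Rightarrow> bool" where
  "collapsible_onto Y y \<longleftrightarrow>
     (\<exists>h U. deformation Y h \<and> openin (top_of_set Y) U \<and> y \<in> U \<and> (\<forall>u\<in>U. h (1, u) = y))"

definition collapsible_moving :: "'a::topological_space set \<Rightarrow> 'a \<Rightarrow> 'a set \<Rightarrow> bool" where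
  "collapsible_moving Y y A \<longleftrightarrow>
     (\<exists>h U. deformation Y h \<and> (\<forall>t\<in>{0..1}. \<forall>a\<in>A. h (t, a) = a) \<and>
        openin (top_of_set Y) U \<and> y \<in> U \<and> (\<forall>u\<in>U. h (1, u) = h (1, y)) \<and> h (1, y) \<noteq> y)"

lemma collapsible_moving_imp_locally_collapsible: "collapsible_moving Y y A \<Longrightarrow> locally_collapsible Y y"
  unfolding collapsible_moving_def locally_collapsible_def by blast

lemma collapsible_moving_not_hf: "collapsible_moving Y y A \<Longrightarrow> y \<notin> hf Y"
  unfolding collapsible_moving_def using hf_deformation_fixed by fastforce

lemma collapsible_moving_subset: "collapsible_moving Y y A \<Longrightarrow> A' \<subseteq> A \<Longrightarrow> collapsible_moving Y y A'"
  unfolding collapsible_moving_def by blast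

text \<open>A deformation k collapsing a neighbourhood of f x is pulled back to X as g \<circ> k \<circ> f, which
  identifies all points of hf X near x with x.\<close>
lemma hf_islimpt_not_locally_collapsible:
  fixes X :: "'a::real_normed_vector set" and Y :: "'b::real_normed_vector set"
  assumes he: "homotopy_equivalence_pair X Y f g" and x: "x \<in> hf X" and lim: "x islimpt hf X"
  shows "\<not> locally_collapsible Y (f x)"
proof
  assume "locally_collapsible Y (f x)"
  then obtain k U where k: "deformation Y k" "openin (top_of_set Y) U" "f x \<in> U"
    "\<forall>u\<in>U. k (1, u) = k (1, f x)"
    unfolding locally_collapsible_def by blast
  have f: "continuous_on X f" "f ` X \<subseteq> Y" using he unfolding homotopy_equivalence_pair_def by auto
  have "openin (top_of_set X) (X \<inter> f -` U)"
    using continuous_openin_preimage[OF f(1) _ k(2)] f(2) by (auto simp: image_subset_iff_funcset)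
  then obtain W where W: "open W" "X \<inter> f -` U = X \<inter> W" by (auto simp: openin_open)
  have "x \<in> W" using W k(3) x hf_subset by blast
  then obtain x' where x': "x' \<in> hf X" "x' \<in> W" "x' \<noteq> x" using lim W(1) unfolding islimpt_def by blast
  then have "f x' \<in> U" using W hf_subset by blast
  have "x' = g (k (1, f x'))" using homotopy_equivalence_pair_hf_track[OF he k(1) x'(1)] by auto
  also have "\<dots> = g (k (1, f x))" using k(4) \<open>f x' \<in> U\<close> by auto
  also have "\<dots> = x" using homotopy_equivalence_pair_hf_track[OF he k(1) x] by auto
  finally show False using x'(3) by simp
qed

lemma hf_locally_collapsible_imp_collapsible_onto:
  fixes X :: "'a::real_normed_vector set" and Y :: "'b::real_normed_vector set"
  assumes he: "homotopy_equivalence_pair X Y f g" and x: "x \<in> hf X"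
    and lc: "locally_collapsible Y (f x)"
  shows "collapsible_onto X x"
proof -
  obtain k V where k: "deformation Y k" "openin (top_of_set Y) V" "f x \<in> V"
    "\<forall>v\<in>V. k (1, v) = k (1, f x)"
    using lc unfolding locally_collapsible_def by blast
  obtain H where H: "continuous_on ({0..1::real} \<times> X) H" "H ` ({0..1} \<times> X) \<subseteq> X"
    "\<forall>u\<in>X. H (0, u) = u" "\<forall>u\<in>X. H (1, u) = g (k (1, f u))"
    using homotopy_equivalence_pair_pullback_homotopic[OF he k(1), of 1]
    unfolding homotopic_with_canon_True_iff by auto
  have f: "continuous_on X f" "f ` X \<subseteq> Y" using he unfolding homotopy_equivalence_pair_def by auto
  define U where "U = X \<inter> f -` V"
  have "openin (top_of_set X) U"
    unfolding U_def using continuous_openin_preimage[OF f(1) _ k(2)] f(2)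
    by (auto simp: image_subset_iff_funcset)
  moreover have "x \<in> U" using x hf_subset k(3) by (auto simp: U_def)
  moreover have "H (1, u) = x" if "u \<in> U" for u
  proof -
    have "H (1, u) = g (k (1, f x))" using that H(4) k(4) by (auto simp: U_def)
    also have "\<dots> = x" using homotopy_equivalence_pair_hf_track[OF he k(1) x] by simp
    finally show ?thesis .
  qed
  moreover have "deformation X H" using H(1-3) unfolding deformation_def by blast
  ultimately show ?thesis unfolding collapsible_onto_def by blast
qed

lemma homotopy_equivalence_pair_hf_image:
  fixes X :: "'a::real_normed_vector set" and Y :: "'b::real_normed_vector set"
  assumes he: "homotopy_equivalence_pair X Y f g"
    and Y: "\<And>y. y \<in> Y - hf Y \<Longrightarrow> locally_collapsible Y y"
    and X: "\<And>x. x \<in> hf X \<Longrightarrow> x islimpt hf X \<or> \<not> collapsible_onto X x"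
  shows "f ` hf X \<subseteq> hf Y"
proof clarify
  fix x assume x: "x \<in> hf X"
  have "f x \<in> Y" using x hf_subset he unfolding homotopy_equivalence_pair_def by blast
  show "f x \<in> hf Y"
  proof (rule ccontr)
    assume "f x \<notin> hf Y"
    then have "locally_collapsible Y (f x)" using Y \<open>f x \<in> Y\<close> by blast
    then show False
      using X[OF x] hf_islimpt_not_locally_collapsible[OF he x]
        hf_locally_collapsible_imp_collapsible_onto[OF he x] by blast
  qed
qed

section \<open>Local deformations\<close>

lemma closed_segment_scaleR_mem: "0 \<le> c \<Longrightarrow> c \<le> 1 \<Longrightarrow> a + c *\<^sub>R (b - a) \<in> closed_segment a b"
  unfolding closed_segment_def
  by (rule CollectI, rule exI[of _ c]) (auto simp: algebra_simps)

lemma collapsible_moving_star: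
  fixes Y :: "'a::real_normed_vector set"
  assumes r: "r > 0" and y: "y \<in> Y"
    and star: "\<And>p. p \<in> Y \<Longrightarrow> dist p y < r \<Longrightarrow> closed_segment y p \<subseteq> Y"
    and w: "closed_segment y (y + w) \<subseteq> Y" "w \<noteq> 0"
  shows "collapsible_moving Y y (Y - ball y r)"
proof -
  define l where "l p = min 1 (max 0 (2 * dist p y / r - 1))" for p
  define a where "a p = max 0 (2 * l p - 1)" for p
  define b where "b p = max 0 (1 - 2 * l p)" for p
  define h where "h z = y + max (a (snd z)) (1 - 2 * fst z) *\<^sub>R (snd z - y)
    + (max 0 (2 * fst z - 1) * b (snd z)) *\<^sub>R w" for z :: "real \<times> 'a"
  have l01: "0 \<le> l p" "l p \<le> 1" for p unfolding l_def by auto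
  have ab: "0 \<le> a p" "a p \<le> 1" "0 \<le> b p" "b p \<le> 1" "a p = 0 \<or> b p = 0" for p
    using l01[of p] unfolding a_def b_def by auto
  have far: "a p = 1" "b p = 0" if "r \<le> dist p y" for p
  proof -
    have "l p = 1" using that r unfolding l_def by (simp add: field_simps)
    then show "a p = 1" "b p = 0" unfolding a_def b_def by auto
  qed
  have near: "a p = 0" "b p = 1" if "dist p y < r / 2" for p
  proof -
    have "l p = 0" using that r unfolding l_def by (simp add: field_simps)
    then show "a p = 0" "b p = 1" unfolding a_def b_def by auto
  qed
  have "continuous_on UNIV h"
    unfolding h_def a_def b_def l_def by (intro continuous_intros) (use r in auto)
  moreover have "h (t, p) \<in> Y" if t: "t \<in> {0..1}" and p: "p \<in> Y" for t p
  proof (cases "dist p y < r")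
    case True
    define c where "c = max (a p) (1 - 2 * t)"
    define d where "d = max 0 (2 * t - 1) * b p"
    have c: "0 \<le> c" "c \<le> 1" using ab[of p] t by (auto simp: c_def)
    have d: "0 \<le> d" "d \<le> 1" using ab[of p] t by (auto simp: d_def mult_le_one)
    have "c = 0 \<or> d = 0" using ab(5)[of p] by (cases "t \<le> 1/2") (auto simp: c_def d_def)
    then have "h (t, p) \<in> closed_segment y p \<union> closed_segment y (y + w)"
      using closed_segment_scaleR_mem[OF c, of y p] closed_segment_scaleR_mem[OF d, of y "y + w"]
      by (auto simp: h_def c_def[symmetric] d_def[symmetric])
    then show ?thesis using star[OF p True] w(1) by blast
  qed (use far p t in \<open>auto simp: h_def max_def\<close>)
  moreover have "h (0, p) = p" for p using ab[of p] by (simp add: h_def)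
  ultimately have "deformation Y h"
    unfolding deformation_def by (auto intro: continuous_on_subset)
  moreover have "\<forall>t\<in>{0..1}. \<forall>p\<in>Y - ball y r. h (t, p) = p"
    using far by (auto simp: h_def dist_commute)
  moreover have "openin (top_of_set Y) (Y \<inter> ball y (r / 2))" "y \<in> Y \<inter> ball y (r / 2)"
    using y r by (auto intro: openin_open_Int)
  moreover have "\<forall>u\<in>Y \<inter> ball y (r / 2). h (1, u) = h (1, y)" "h (1, y) \<noteq> y"
    using near near[of y] r w(2) by (auto simp: h_def dist_commute)
  ultimately show ?thesis unfolding collapsible_moving_def by blast
qed

lemma hf_closure_mem:
  fixes Y :: "'a::real_normed_vector set"
  assumes x: "x \<in> Y" "x \<in> closure S" and S: "S \<subseteq> hf Y"
  shows "x \<in> hf Y"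
  unfolding hf_iff_deformation
proof (intro CollectI conjI x allI impI ballI)
  fix h t assume h: "deformation Y h" and t: "t \<in> {0..(1::real)}"
  have hc: "continuous_on ({0..1} \<times> Y) h" using h unfolding deformation_def by auto
  have "continuous_on Y (\<lambda>y. h (t, y))"
    by (rule continuous_on_compose2[OF hc, of _ "\<lambda>y. (t, y)"]) (use t in \<open>auto intro!: continuous_intros\<close>)
  then have "continuous_on Y (\<lambda>y. h (t, y) - y)"
    by (intro continuous_intros)
  from continuous_closedin_preimage_constant[OF this, of 0]
  obtain C where C: "closed C" "{y \<in> Y. h (t, y) - y = 0} = Y \<inter> C" by (auto simp: closedin_closed)
  have SY: "S \<subseteq> Y" using S hf_subset by blast
  have "S \<subseteq> C" using C(2) S SY hf_deformation_fixed[OF _ h t] by auto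
  then have "closure S \<subseteq> C" using C(1) closure_minimal by blast
  then have "x \<in> Y \<inter> C" using x by auto
  then show "h (t, x) = x" using C(2) by auto
qed

text \<open>The openness of Z - {e v} in Y says that Z meets the rest of Y only at e v.\<close>
lemma deformation_extend_from_copy:
  assumes hm: "homeomorphism K Z e e'" and Z: "closed Z" "Z \<subseteq> Y"
    and op: "openin (top_of_set Y) (Z - {e v})" and v: "v \<in> K"
    and h: "deformation K h" and hv: "\<forall>t\<in>{0..1}. h (t, v) = v"
  shows "deformation Y (\<lambda>z. if snd z \<in> Z then e (h (fst z, e' (snd z))) else snd z)"
proof -
  have e'e: "\<And>x. x \<in> K \<Longrightarrow> e' (e x) = x" and ee': "\<And>y. y \<in> Z \<Longrightarrow> e (e' y) = y"
    and e'Z: "e' ` Z = K" and ec: "continuous_on K e" and e'c: "continuous_on Z e'"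
    using hm unfolding homeomorphism_def by auto
  have hc: "continuous_on ({0..1} \<times> K) h" "h ` ({0..1} \<times> K) \<subseteq> K" "\<forall>x\<in>K. h (0, x) = x"
    using h unfolding deformation_def by auto
  have split: "{0..1} \<times> Y = ({0..1} \<times> Z) \<union> ({0..1} \<times> (Y - (Z - {e v})))" using Z(2) by auto
  have "{0..1} \<times> Z = ({0..1} \<times> Y) \<inter> ({0..1::real} \<times> Z)" using Z(2) by auto
  then have cl1: "closedin (top_of_set ({0..1} \<times> Y)) ({0..1::real} \<times> Z)"
    using closedin_closed_Int[OF closed_Times[OF closed_atLeastAtMost Z(1)]] by metis
  have "openin (top_of_set ({0..1} \<times> Y)) ({0..1::real} \<times> (Z - {e v}))"
    using op by (simp add: openin_Times)
  then have "closedin (top_of_set ({0..1} \<times> Y)) (({0..1} \<times> Y) - ({0..1::real} \<times> (Z - {e v})))"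
    by (rule closedin_diff[rotated]) (metis closedin_topspace topspace_euclidean_subtopology)
  moreover have "({0..1} \<times> Y) - ({0..1} \<times> (Z - {e v})) = {0..1::real} \<times> (Y - (Z - {e v}))" by auto
  ultimately have cl2: "closedin (top_of_set ({0..1} \<times> Y)) ({0..1::real} \<times> (Y - (Z - {e v})))"
    by simp
  have "continuous_on ({0..1::real} \<times> Z) (\<lambda>z. (fst z, e' (snd z)))"
    by (intro continuous_intros continuous_on_compose2[OF e'c]) auto
  then have "continuous_on ({0..1::real} \<times> Z) (\<lambda>z. h (fst z, e' (snd z)))"
    by (rule continuous_on_compose2[OF hc(1)]) (use e'Z in \<open>auto simp: mem_Times_iff\<close>)
  then have c1: "continuous_on ({0..1::real} \<times> Z) (\<lambda>z. e (h (fst z, e' (snd z))))"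
    by (rule continuous_on_compose2[OF ec]) (use hc(2) e'Z in \<open>force simp: mem_Times_iff\<close>)
  have "continuous_on ({0..1} \<times> Y) (\<lambda>z. if snd z \<in> Z then e (h (fst z, e' (snd z))) else snd z)"
    unfolding split
  proof (rule continuous_on_cases_local[OF _ _ c1 continuous_on_snd[OF continuous_on_id]])
    show "closedin (top_of_set ({0..1} \<times> Z \<union> {0..1} \<times> (Y - (Z - {e v})))) ({0..1::real} \<times> Z)"
      "closedin (top_of_set ({0..1} \<times> Z \<union> {0..1} \<times> (Y - (Z - {e v})))) ({0..1::real} \<times> (Y - (Z - {e v})))"
      using cl1 cl2 by (simp_all only: split)
    fix z :: "real \<times> _" assume "z \<in> {0..1} \<times> Z \<and> snd z \<notin> Z \<or> z \<in> {0..1} \<times> (Y - (Z - {e v})) \<and> snd z \<in> Z"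
    then have "fst z \<in> {0..1}" "snd z = e v" by auto
    then show "e (h (fst z, e' (snd z))) = snd z" using e'e[OF v] hv by simp
  qed
  moreover have "(\<lambda>z. if snd z \<in> Z then e (h (fst z, e' (snd z))) else snd z) ` ({0..1} \<times> Y) \<subseteq> Y"
  proof (rule image_subsetI)
    fix z :: "real \<times> _" assume z: "z \<in> {0..1} \<times> Y"
    show "(if snd z \<in> Z then e (h (fst z, e' (snd z))) else snd z) \<in> Y"
    proof (cases "snd z \<in> Z")
      case True
      then have "h (fst z, e' (snd z)) \<in> K" using hc(2) z e'Z by (force simp: mem_Times_iff)
      then show ?thesis using True hm Z(2) unfolding homeomorphism_def by auto
    qed (use z in auto)
  qed
  moreover have "\<forall>y\<in>Y. (if y \<in> Z then e (h (0, e' y)) else y) = y"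
    using hc(3) e'Z ee' by auto
  ultimately show ?thesis unfolding deformation_def fst_conv snd_conv by blast
qed

lemma collapsible_moving_embedding:
  fixes e :: "'a::real_normed_vector \<Rightarrow> 'b::real_normed_vector"
  assumes K: "compact K" and ec: "continuous_on K e" and inj: "inj_on e K"
    and sub: "e ` K \<subseteq> Y" and op: "openin (top_of_set Y) (e ` K - {e v})"
    and v: "v \<in> K" and p: "p \<in> K" "p \<noteq> v" and L: "collapsible_moving K p {v}"
  shows "collapsible_moving Y (e p) {}"
proof -
  define Z where "Z = e ` K"
  obtain e' where hm: "homeomorphism K Z e e'" using homeomorphism_compact[OF K ec _ inj] Z_def by blast
  then have e'e: "\<And>x. x \<in> K \<Longrightarrow> e' (e x) = x" unfolding homeomorphism_def by auto
  obtain h U where h: "deformation K h" "\<forall>t\<in>{0..1}. h (t, v) = v" "openin (top_of_set K) U" "p \<in> U"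
    "\<forall>u\<in>U. h (1, u) = h (1, p)" "h (1, p) \<noteq> p"
    using L unfolding collapsible_moving_def by blast
  define H where "H z = (if snd z \<in> Z then e (h (fst z, e' (snd z))) else snd z)" for z
  have "closed Z" unfolding Z_def using compact_continuous_image[OF ec K] compact_imp_closed by blast
  moreover have "Z \<subseteq> Y" "openin (top_of_set Y) (Z - {e v})" using sub op by (simp_all add: Z_def)
  ultimately have "deformation Y H"
    unfolding H_def using deformation_extend_from_copy[OF hm _ _ _ v h(1,2)] by blast
  define U' where "U' = e ` (U - {v})"
  have UK: "U \<subseteq> K" using h(3) by (rule openin_imp_subset)
  have "openin (top_of_set K) (U - {v})" using openin_diff[OF h(3) closedin_closed_Int[of "{v}" K]] v
    by (simp add: Int_absorb2)
  then have "openin (top_of_set Z) U'" unfolding U'_def using homeomorphism_imp_open_map[OF hm] by blast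
  moreover have "U' \<subseteq> Z - {e v}" unfolding U'_def Z_def using UK inj v by (auto simp: inj_on_def)
  ultimately have "openin (top_of_set (Z - {e v})) U'" by (metis Diff_subset openin_subset_trans)
  then have "openin (top_of_set Y) U'" using openin_trans op Z_def by blast
  moreover have "e p \<in> U'" unfolding U'_def using h(4) p by auto
  moreover have "H (1, u) = H (1, e p)" if u: "u \<in> U'" for u
  proof -
    obtain x where x: "x \<in> U" "u = e x" using u unfolding U'_def by blast
    then have "u \<in> Z" using UK by (auto simp: Z_def)
    then have "H (1, u) = e (h (1, x))" using x UK e'e by (auto simp: H_def)
    also have "\<dots> = e (h (1, p))" using h(5) x(1) by simp
    also have "\<dots> = H (1, e p)" using p e'e by (simp add: H_def Z_def)
    finally show ?thesis .
  qed
  moreover have "H (1, e p) \<noteq> e p"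
  proof -
    have "h (1, p) \<in> K" using h(1) p unfolding deformation_def by force
    then have "e (h (1, p)) \<noteq> e p" using h(6) inj p by (auto simp: inj_on_def)
    then show ?thesis using e'e p by (simp add: H_def Z_def)
  qed
  ultimately show ?thesis unfolding collapsible_moving_def using \<open>deformation Y H\<close> by blast
qed

section \<open>The double broom\<close>

text \<open>Since 1 / 0 = 0, bristle 0 is the segment [v, a_0] and upper_broom is the upper half of
  the double broom.\<close>
definition broom_foot :: "nat \<Rightarrow> real \<times> real" where "broom_foot n = (1 / real n, 0)"
definition broom_tip :: "real \<times> real" where "broom_tip = (0, 1)"
definition bristle :: "nat \<Rightarrow> (real \<times> real) set" where "bristle n = closed_segment (broom_foot n) broom_tip"
definition upper_broom :: "(real \<times> real) set" where "upper_broom = (\<Union>n. bristle n)"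

lemma broom_foot_0: "broom_foot 0 = (0,0)" by (simp add: broom_foot_def)

lemma broom_foot_inj: "broom_foot m = broom_foot n \<Longrightarrow> m = n"
  by (cases "m = 0"; cases "n = 0") (auto simp: broom_foot_def)

lemma broom_foot_tendsto: "broom_foot \<longlonglongrightarrow> (0,0)"
proof -
  have "(\<lambda>n. 1 / real n) \<longlonglongrightarrow> 0" by (rule lim_const_over_n)
  then have "(\<lambda>n. (1 / real n, 0::real)) \<longlonglongrightarrow> (0, 0)"
    by (intro tendsto_Pair) auto
  then show ?thesis unfolding broom_foot_def by simp
qed

lemma bristle_iff: "q \<in> bristle n \<longleftrightarrow> (\<exists>u\<in>{0..1}. q = ((1 - u) / real n, u))"
  unfolding bristle_def closed_segment_def broom_foot_def broom_tip_def
  by (auto simp: algebra_simps)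

lemma double_broom_upper_lower: "double_broom = upper_broom \<union> uminus ` upper_broom"
proof -
  have neg: "uminus ` closed_segment a b = closed_segment (-a) (-b)" for a b :: "real \<times> real"
    using closed_segment_linear_image[of uminus a b] by (simp add: linear_uminus)
  have T: "upper_broom = closed_segment (0,0) (0,1) \<union> (\<Union>n\<in>{1..}. closed_segment (1 / real n, 0) (0, 1))"
  proof -
    have "upper_broom = bristle 0 \<union> (\<Union>n\<in>{1..}. bristle n)"
    proof -
      have "(UNIV::nat set) = insert 0 {1..}" by auto
      then have "(\<Union>n. bristle n) = (\<Union>n\<in>insert 0 {1..}. bristle n)" by simp
      then show ?thesis unfolding upper_broom_def by simp
    qed
    then show ?thesis by (simp add: bristle_def broom_foot_def broom_tip_def)
  qed
  have "uminus ` upper_broom = closed_segment (0,0) (0,-1) \<union> (\<Union>n\<in>{1..}. closed_segment (- 1 / real n, 0) (0, -1))"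
    unfolding T image_Un image_UN neg by simp
  then show ?thesis unfolding double_broom_def T by auto
qed

lemma upper_broom_cone: "upper_broom = (\<lambda>z. broom_tip + fst z *\<^sub>R (snd z - broom_tip)) ` ({0..1} \<times> range broom_foot)"
proof -
  have "x \<in> closed_segment b broom_tip \<longleftrightarrow> (\<exists>s\<in>{0..1}. x = broom_tip + s *\<^sub>R (b - broom_tip))" for x b :: "real \<times> real"
  proof -
    have "x \<in> closed_segment b broom_tip \<longleftrightarrow> x \<in> closed_segment broom_tip b" by (simp add: closed_segment_commute)
    also have "\<dots> \<longleftrightarrow> (\<exists>s\<in>{0..1}. x = broom_tip + s *\<^sub>R (b - broom_tip))"
      unfolding closed_segment_def by (auto simp: algebra_simps)
    finally show ?thesis .
  qed
  note * = this
  show ?thesis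
  proof (rule set_eqI)
    fix x
    have "x \<in> upper_broom \<longleftrightarrow> (\<exists>n. \<exists>s\<in>{0..1}. x = broom_tip + s *\<^sub>R (broom_foot n - broom_tip))"
      unfolding upper_broom_def bristle_def using * by auto
    also have "\<dots> \<longleftrightarrow> x \<in> (\<lambda>z. broom_tip + fst z *\<^sub>R (snd z - broom_tip)) ` ({0..1} \<times> range broom_foot)"
      by (auto simp: image_iff)
    finally show "x \<in> upper_broom \<longleftrightarrow> x \<in> (\<lambda>z. broom_tip + fst z *\<^sub>R (snd z - broom_tip)) ` ({0..1} \<times> range broom_foot)" .
  qed
qed

lemma compact_range_broom_foot: "compact (range broom_foot)"
proof -
  have "compact (insert (0,0) (range broom_foot))" using compact_sequence_with_limit[OF broom_foot_tendsto] .
  moreover have "insert (0,0) (range broom_foot) = range broom_foot" using broom_foot_0 by (metis insert_absorb rangeI)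
  ultimately show ?thesis by simp
qed

lemma compact_tip_cone:
  assumes "compact B"
  shows "compact ((\<lambda>z. broom_tip + fst z *\<^sub>R (snd z - broom_tip)) ` ({0..1::real} \<times> B))"
  by (rule compact_continuous_image) (auto intro!: continuous_intros compact_Times assms)

lemma compact_upper_broom: "compact upper_broom"
  unfolding upper_broom_cone using compact_tip_cone[OF compact_range_broom_foot] .

lemma compact_double_broom: "compact double_broom"
  unfolding double_broom_upper_lower
proof (rule compact_Un[OF compact_upper_broom])
  show "compact (uminus ` upper_broom)" by (rule compact_continuous_image[OF continuous_on_minus[OF continuous_on_id] compact_upper_broom])
qed

lemma upper_broom_snd: "q \<in> upper_broom \<Longrightarrow> 0 \<le> snd q \<and> snd q \<le> 1"
  unfolding upper_broom_def by (auto simp: bristle_iff)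

lemma upper_broom_fst: "q \<in> upper_broom \<Longrightarrow> 0 \<le> fst q"
  unfolding upper_broom_def by (auto simp: bristle_iff)

lemma bristle_subset_double_broom: "bristle n \<subseteq> double_broom"
  unfolding double_broom_upper_lower upper_broom_def by auto

lemma upper_broom_subset_double_broom: "upper_broom \<subseteq> double_broom"
  unfolding double_broom_upper_lower by auto

lemma uminus_double_broom: "uminus ` double_broom = double_broom"
  unfolding double_broom_upper_lower image_Un by (auto simp: image_image)

lemma double_broom_uminus: "q \<in> double_broom \<Longrightarrow> - q \<in> double_broom"
  using uminus_double_broom by blast

lemma center_in_double_broom: "(0,0) \<in> double_broom"
  using bristle_subset_double_broom[of 0] by (auto simp: bristle_iff)

lemma tip_in_bristle: "broom_tip \<in> bristle n" unfolding bristle_def by simp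
lemma foot_in_bristle: "broom_foot n \<in> bristle n" unfolding bristle_def by simp

text \<open>The double broom with bristle n removed except for its tip, written as a union of compact cones.\<close>
definition other_bristles :: "nat \<Rightarrow> (real \<times> real) set" where
  "other_bristles n = (\<lambda>z. broom_tip + fst z *\<^sub>R (snd z - broom_tip)) ` ({0..1} \<times> (range broom_foot - {broom_foot n})) \<union> uminus ` upper_broom"

lemma range_broom_foot_Diff:
  assumes n: "n \<ge> 1"
  shows "range broom_foot - {broom_foot n} = broom_foot ` {..<n} \<union> insert (0,0) (range (\<lambda>k. broom_foot (k + n + 1)))"
proof (rule set_eqI)
  fix x
  show "x \<in> range broom_foot - {broom_foot n} \<longleftrightarrow> x \<in> broom_foot ` {..<n} \<union> insert (0,0) (range (\<lambda>k. broom_foot (k + n + 1)))"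
  proof
    assume "x \<in> range broom_foot - {broom_foot n}"
    then obtain m where m: "x = broom_foot m" "m \<noteq> n" by auto
    show "x \<in> broom_foot ` {..<n} \<union> insert (0,0) (range (\<lambda>k. broom_foot (k + n + 1)))"
    proof (cases "m < n")
      case True then show ?thesis using m by auto
    next
      case False
      then have "m = (m - n - 1) + n + 1" using m by auto
      then show ?thesis using m by (metis UnI2 insertI2 rangeI)
    qed
  next
    assume x: "x \<in> broom_foot ` {..<n} \<union> insert (0,0) (range (\<lambda>k. broom_foot (k + n + 1)))"
    then show "x \<in> range broom_foot - {broom_foot n}"
    proof (elim UnE insertE)
      assume "x \<in> broom_foot ` {..<n}"
      then show ?thesis using broom_foot_inj by fastforce
    next
      assume "x = (0,0)"
      then show ?thesis using broom_foot_0 n broom_foot_inj by (metis DiffI rangeI singletonD not_one_le_zero)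
    next
      assume "x \<in> range (\<lambda>k. broom_foot (k + n + 1))"
      then show ?thesis using broom_foot_inj by fastforce
    qed
  qed
qed

lemma compact_range_broom_foot_Diff:
  assumes n: "n \<ge> 1"
  shows "compact (range broom_foot - {broom_foot n})"
proof -
  have l: "(\<lambda>k. broom_foot (k + n + 1)) \<longlonglongrightarrow> (0,0)"
    using LIMSEQ_ignore_initial_segment[OF broom_foot_tendsto, of "n+1"] by (simp add: add.assoc)
  show ?thesis unfolding range_broom_foot_Diff[OF n]
    by (intro compact_Un compact_sequence_with_limit[OF l] finite_imp_compact) auto
qed

lemma compact_other_bristles: "n \<ge> 1 \<Longrightarrow> compact (other_bristles n)"
  unfolding other_bristles_def
  by (intro compact_Un compact_tip_cone compact_range_broom_foot_Diff compact_continuous_image[OF continuous_on_minus[OF continuous_on_id] compact_upper_broom])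

lemma tip_cone_iff: "z \<in> (\<lambda>z. broom_tip + fst z *\<^sub>R (snd z - broom_tip)) ` ({0..1} \<times> B) \<longleftrightarrow>
    (\<exists>s\<in>{0..1}. \<exists>b\<in>B. z = broom_tip + s *\<^sub>R (b - broom_tip))"
  by (auto simp: image_iff)

lemma double_broom_bristle_split: "n \<ge> 1 \<Longrightarrow> double_broom = bristle n \<union> other_bristles n"
proof -
  assume n: "n \<ge> 1"
  have "upper_broom \<subseteq> bristle n \<union> other_bristles n"
  proof
    fix x assume "x \<in> upper_broom"
    then obtain m where "x \<in> bristle m" unfolding upper_broom_def by auto
    show "x \<in> bristle n \<union> other_bristles n"
    proof (cases "m = n")
      case True then show ?thesis using \<open>x \<in> bristle m\<close> by auto
    next
      case False
      then have "broom_foot m \<in> range broom_foot - {broom_foot n}" using broom_foot_inj by auto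
      moreover have "x \<in> closed_segment broom_tip (broom_foot m)" using \<open>x \<in> bristle m\<close> by (simp add: bristle_def closed_segment_commute)
      then obtain s where "s \<in> {0..1}" "x = broom_tip + s *\<^sub>R (broom_foot m - broom_tip)"
        unfolding closed_segment_def by (auto simp: algebra_simps)
      ultimately have "x \<in> (\<lambda>z. broom_tip + fst z *\<^sub>R (snd z - broom_tip)) ` ({0..1} \<times> (range broom_foot - {broom_foot n}))"
        unfolding tip_cone_iff by blast
      then show ?thesis unfolding other_bristles_def by blast
    qed
  qed
  moreover have "other_bristles n \<subseteq> double_broom"
  proof -
    have "(\<lambda>z. broom_tip + fst z *\<^sub>R (snd z - broom_tip)) ` ({0..1} \<times> (range broom_foot - {broom_foot n})) \<subseteq> upper_broom"
      unfolding upper_broom_cone by auto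
    then show ?thesis unfolding other_bristles_def double_broom_upper_lower by auto
  qed
  ultimately show ?thesis using bristle_subset_double_broom[of n] unfolding double_broom_upper_lower other_bristles_def by auto
qed

lemma bristle_Int_other_bristles: assumes n: "n \<ge> 1" shows "bristle n \<inter> other_bristles n = {broom_tip}"
proof -
  have "x = broom_tip" if x1: "x \<in> bristle n" and x2: "x \<in> other_bristles n" for x
  proof -
    obtain u where u: "u \<in> {0..1}" "x = ((1 - u) / real n, u)" using x1 by (auto simp: bristle_iff)
    from x2 show ?thesis unfolding other_bristles_def
    proof (elim UnE)
      assume "x \<in> (\<lambda>z. broom_tip + fst z *\<^sub>R (snd z - broom_tip)) ` ({0..1} \<times> (range broom_foot - {broom_foot n}))"
      then obtain s b where sb: "s \<in> {0..1}" "b \<in> range broom_foot - {broom_foot n}" "x = broom_tip + s *\<^sub>R (b - broom_tip)"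
        unfolding tip_cone_iff by blast
      then obtain m where "b = broom_foot m" by auto
      then have sm: "s \<in> {0..1}" "m \<noteq> n" "x = broom_tip + s *\<^sub>R (broom_foot m - broom_tip)" using sb by auto
      then have e1: "u = 1 - s" and e2: "(1 - u) / real n = s / real m" using u
        by (auto simp: broom_foot_def broom_tip_def)
      show ?thesis
      proof (cases "s = 0")
        case True then show ?thesis using sm by simp
      next
        case False
        have "s * (1 / real n) = s * (1 / real m)" using e1 e2 by simp
        then have "1 / real n = 1 / real m" using False by simp
        then have "broom_foot n = broom_foot m" by (simp add: broom_foot_def)
        then show ?thesis using broom_foot_inj sm by blast
      qed
    next
      assume "x \<in> uminus ` upper_broom"
      then obtain y where y: "y \<in> upper_broom" "x = - y" by auto
      then have "snd x \<le> 0" "fst x \<le> 0" using upper_broom_snd upper_broom_fst by fastforce+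
      then have "u = 0" "(1 - u) / real n \<le> 0" using u by auto
      then show ?thesis using n by simp
    qed
  qed
  moreover have "broom_tip \<in> other_bristles n"
  proof -
    have "broom_foot 0 \<in> range broom_foot - {broom_foot n}" using n broom_foot_inj by (metis DiffI rangeI singletonD not_one_le_zero)
    then have "broom_tip \<in> (\<lambda>z. broom_tip + fst z *\<^sub>R (snd z - broom_tip)) ` ({0..1} \<times> (range broom_foot - {broom_foot n}))"
    proof -
      have "broom_tip = broom_tip + (0::real) *\<^sub>R (broom_foot 0 - broom_tip)" by simp
      then show ?thesis unfolding tip_cone_iff using \<open>broom_foot 0 \<in> range broom_foot - {broom_foot n}\<close> by force
    qed
    then show ?thesis unfolding other_bristles_def by blast
  qed
  ultimately show ?thesis using tip_in_bristle by blast
qed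

lemma foot_notin_other_bristles: assumes n: "n \<ge> 1" shows "broom_foot n \<notin> other_bristles n"
proof
  assume "broom_foot n \<in> other_bristles n"
  moreover have "broom_foot n \<in> bristle n" by (rule foot_in_bristle)
  ultimately have "broom_foot n = broom_tip" using bristle_Int_other_bristles[OF n] by blast
  then show False by (simp add: broom_foot_def broom_tip_def)
qed

lemma center_notin_bristle: "n \<ge> 1 \<Longrightarrow> (0,0) \<notin> bristle n"
  by (auto simp: bristle_iff)

lemma bristles_limit_on_upper_axis:
  assumes near: "\<And>\<epsilon> M. \<epsilon> > 0 \<Longrightarrow> \<exists>n\<ge>M. \<exists>q'\<in>bristle n. dist q' q < \<epsilon>"
  shows "fst q = 0 \<and> 0 \<le> snd q"
proof -
  have bound: "\<bar>fst q\<bar> < 2 * c \<and> - c < snd q" if c: "c > 0" for c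
  proof -
    obtain M :: nat where M: "1 / c < real M" using reals_Archimedean2 by blast
    obtain n q' where nq: "n \<ge> M" "q' \<in> bristle n" "dist q' q < c" using near[OF c] by blast
    then have d: "\<bar>fst q' - fst q\<bar> < c" "\<bar>snd q' - snd q\<bar> < c"
      using dist_fst_le[of q' q] dist_snd_le[of q' q] by (auto simp: dist_real_def)
    obtain u where u: "u \<in> {0..1}" "q' = ((1 - u) / real n, u)" using nq(2) by (auto simp: bristle_iff)
    have "n > 0" using M nq c by (cases n) (auto simp: field_simps)
    have "1 / c < real n" using M nq by linarith
    then have "1 / real n < c" using c \<open>n > 0\<close> by (simp add: field_simps)
    moreover have "0 \<le> (1 - u) / real n" "(1 - u) / real n \<le> 1 / real n" using u \<open>n > 0\<close>
      by (auto simp: divide_right_mono)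
    ultimately have "0 \<le> fst q'" "fst q' < c" "0 \<le> snd q'" using u by auto
    then show ?thesis using d by linarith
  qed
  have "fst q = 0"
  proof (rule ccontr)
    assume "fst q \<noteq> 0"
    then show False using bound[of "\<bar>fst q\<bar> / 4"] by linarith
  qed
  moreover have "0 \<le> snd q"
  proof (rule ccontr)
    assume "\<not> 0 \<le> snd q"
    then show False using bound[of "- snd q / 2"] by linarith
  qed
  ultimately show ?thesis by blast
qed

lemma double_broom_snd_pos: "q \<in> double_broom \<Longrightarrow> 0 < snd q \<Longrightarrow> q \<in> upper_broom"
  unfolding double_broom_upper_lower using upper_broom_snd by force

lemma segment_tip_upper_broom: "q \<in> upper_broom \<Longrightarrow> closed_segment broom_tip q \<subseteq> double_broom"
proof -
  assume "q \<in> upper_broom"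
  then obtain m where "q \<in> bristle m" unfolding upper_broom_def by auto
  then have "closed_segment broom_tip q \<subseteq> bristle m"
    using tip_in_bristle by (intro closed_segment_subset) (auto simp: bristle_def)
  then show ?thesis using bristle_subset_double_broom by blast
qed

lemma collapsible_moving_upper_interior:
  assumes p: "p \<in> double_broom" and h0: "0 < snd p" "snd p < 1"
  shows "collapsible_moving double_broom p {(0,0)}"
proof -
  define K where "K = double_broom"
  define c where "c = snd p"
  define mu where "mu = (\<lambda>q::real\<times>real. min 1 (max 0 (4 * snd q / c - 1)))"
  define h where "h = (\<lambda>z::real \<times> (real\<times>real). broom_tip + (1 - fst z * mu (snd z)) *\<^sub>R (snd z - broom_tip))"
  have muc: "continuous_on S mu" for S unfolding mu_def using h0 by (intro continuous_intros) (auto simp: c_def)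
  have cont: "continuous_on ({0..1} \<times> K) h" unfolding h_def
    by (intro continuous_intros continuous_on_compose2[OF muc]) auto
  have mu01: "0 \<le> mu q" "mu q \<le> 1" for q unfolding mu_def by auto
  have mu0: "mu q = 0" if "snd q \<le> c / 4" for q
  proof -
    have "4 * snd q / c - 1 \<le> 0" using that h0 by (simp add: c_def field_simps)
    then show ?thesis unfolding mu_def by auto
  qed
  have mu1: "mu q = 1" if "snd q > c / 2" for q
  proof -
    have "4 * snd q / c - 1 \<ge> 1" using that h0 by (simp add: c_def field_simps)
    then show ?thesis unfolding mu_def by auto
  qed
  have img: "h (t, q) \<in> K" if t: "t \<in> {0..1}" and q: "q \<in> K" for t q
  proof (cases "snd q \<le> c / 4")
    case True then show ?thesis using q mu0 by (simp add: h_def)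
  next
    case False
    then have "0 < snd q" using h0 by (simp add: c_def)
    then have "q \<in> upper_broom" using double_broom_snd_pos q K_def by blast
    then have seg: "closed_segment broom_tip q \<subseteq> K" using segment_tip_upper_broom K_def by blast
    have "0 \<le> 1 - t * mu q" using t mu01[of q] by (simp add: mult_le_one)
    moreover have "1 - t * mu q \<le> 1" using t mu01[of q] by simp
    ultimately show ?thesis using seg closed_segment_scaleR_mem[of "1 - t * mu q" broom_tip q] by (auto simp: h_def)
  qed
  have hom: "deformation K h" unfolding deformation_def
  proof (intro conjI cont ballI)
    show "h ` ({0..1} \<times> K) \<subseteq> K" using img by auto
    show "h (0, y) = y" if "y \<in> K" for y by (simp add: h_def)
  qed
  have fx: "\<forall>t\<in>{0..1}. \<forall>a\<in>{(0,0)}. h (t, a) = a"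
    using mu0[of "(0,0)"] h0 by (simp add: h_def c_def)
  define U where "U = K \<inter> {q. c / 2 < snd q}"
  have U: "openin (top_of_set K) U" unfolding U_def
    by (intro openin_open_Int open_Collect_less continuous_intros)
  have pU: "p \<in> U" using p h0 by (simp add: U_def K_def c_def)
  have const: "\<forall>u\<in>U. h (1, u) = h (1, p)" using mu1 pU by (simp add: U_def h_def)
  have mv: "h (1, p) \<noteq> p" using mu1[of p] pU h0 by (auto simp: U_def h_def broom_tip_def c_def)
  show ?thesis unfolding collapsible_moving_def K_def[symmetric] using hom fx U pU const mv by blast
qed

lemma collapsible_moving_tip: "collapsible_moving double_broom broom_tip {(0,0)}"
proof -
  have "collapsible_moving double_broom broom_tip (double_broom - ball broom_tip (1/2))"
  proof (rule collapsible_moving_star[where w = "(0,-1)"])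
    show "broom_tip \<in> double_broom" using tip_in_bristle bristle_subset_double_broom by blast
    show "closed_segment broom_tip (broom_tip + (0, -1)) \<subseteq> double_broom"
      using bristle_subset_double_broom[of 0] by (simp add: bristle_def broom_foot_def broom_tip_def closed_segment_commute)
    fix q assume q: "q \<in> double_broom" "dist q broom_tip < 1/2"
    have "0 < snd q"
    proof (rule ccontr)
      assume "\<not> 0 < snd q"
      then have "1 \<le> \<bar>snd q - snd broom_tip\<bar>" by (simp add: broom_tip_def)
      also have "\<dots> \<le> dist q broom_tip"
        by (metis dist_real_def dist_snd_le)
      finally show False using q by simp
    qed
    then show "closed_segment broom_tip q \<subseteq> double_broom" using q double_broom_snd_pos segment_tip_upper_broom by blast
  qed (auto simp: zero_prod_def)
  moreover have "(0,0) \<in> double_broom - ball broom_tip (1/2)" using center_in_double_broom by (simp add: broom_tip_def dist_norm)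
  ultimately show ?thesis using collapsible_moving_subset by blast
qed

lemma collapsible_moving_foot:
  assumes n: "n \<ge> 1"
  shows "collapsible_moving double_broom (broom_foot n) {(0,0)}"
proof -
  have "open (- other_bristles n)" using compact_other_bristles[OF n] compact_imp_closed by blast
  then obtain r where r: "r > 0" "ball (broom_foot n) r \<subseteq> - other_bristles n"
    using foot_notin_other_bristles[OF n] open_contains_ball by blast
  define r' where "r' = min r (1 / real n)"
  have r': "r' > 0" using r n by (simp add: r'_def)
  have "collapsible_moving double_broom (broom_foot n) (double_broom - ball (broom_foot n) r')"
  proof (rule collapsible_moving_star[where w = "broom_tip - broom_foot n"])
    show "broom_foot n \<in> double_broom" using foot_in_bristle bristle_subset_double_broom by blast
    show "closed_segment (broom_foot n) (broom_foot n + (broom_tip - broom_foot n)) \<subseteq> double_broom"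
      using bristle_subset_double_broom[of n] by (simp add: bristle_def)
    show "broom_tip - broom_foot n \<noteq> 0" by (simp add: broom_foot_def broom_tip_def zero_prod_def)
    fix q assume q: "q \<in> double_broom" "dist q (broom_foot n) < r'"
    then have "q \<in> ball (broom_foot n) r" by (simp add: r'_def dist_commute)
    then have "q \<notin> other_bristles n" using r by auto
    then have "q \<in> bristle n" using q double_broom_bristle_split[OF n] by blast
    then show "closed_segment (broom_foot n) q \<subseteq> double_broom"
      using foot_in_bristle bristle_subset_double_broom by (metis closed_segment_subset convex_closed_segment bristle_def subset_trans)
  qed (use r' in auto)
  moreover have "(0,0) \<in> double_broom - ball (broom_foot n) r'"
    using center_in_double_broom n by (simp add: broom_foot_def r'_def dist_norm)
  ultimately show ?thesis using collapsible_moving_subset by blast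
qed

lemma collapsible_moving_upper_broom:
  assumes p: "p \<in> upper_broom" "p \<noteq> (0,0)"
  shows "collapsible_moving double_broom p {(0,0)}"
proof -
  obtain n where "p \<in> bristle n" using p unfolding upper_broom_def by auto
  then obtain u where u: "u \<in> {0..1}" "p = ((1 - u) / real n, u)" by (auto simp: bristle_iff)
  have pK: "p \<in> double_broom" using p upper_broom_subset_double_broom by blast
  consider "u = 1" | "u = 0" | "0 < u \<and> u < 1" using u by fastforce
  then show ?thesis
  proof cases
    case 1 then have "p = broom_tip" using u by (simp add: broom_tip_def)
    then show ?thesis using collapsible_moving_tip by simp
  next
    case 2
    then have "p = broom_foot n" using u by (simp add: broom_foot_def)
    moreover have "n \<ge> 1" using p u 2 by (cases n) auto
    ultimately show ?thesis using collapsible_moving_foot by simp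
  next
    case 3 then show ?thesis using collapsible_moving_upper_interior[OF pK] u by simp
  qed
qed

lemma collapsible_moving_uminus:
  assumes L: "collapsible_moving double_broom p A"
  shows "collapsible_moving double_broom (- p) (uminus ` A)"
proof -
  define K where "K = double_broom"
  obtain h U where h: "deformation K h" "\<forall>t\<in>{0..1}. \<forall>a\<in>A. h (t, a) = a" "openin (top_of_set K) U" "p \<in> U"
    "\<forall>u\<in>U. h (1, u) = h (1, p)" "h (1, p) \<noteq> p"
    using L unfolding collapsible_moving_def K_def by blast
  have hc: "continuous_on ({0..1} \<times> K) h" "h ` ({0..1} \<times> K) \<subseteq> K" "\<forall>y\<in>K. h (0, y) = y"
    using h(1) unfolding deformation_def by auto
  define h' where "h' = (\<lambda>z::real \<times> (real \<times> real). - h (fst z, - snd z))"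
  have a: "continuous_on ({0..1} \<times> K) (\<lambda>z::real \<times> (real \<times> real). (fst z, - snd z))"
    by (intro continuous_intros)
  have cont: "continuous_on ({0..1} \<times> K) h'" unfolding h'_def
    apply (intro continuous_intros)
    apply (rule continuous_on_compose2[OF hc(1) a])
    using double_broom_uminus by (auto simp: K_def mem_Times_iff)
  have img: "h' ` ({0..1} \<times> K) \<subseteq> K"
  proof (rule image_subsetI)
    fix z assume "z \<in> {0..(1::real)} \<times> K"
    then have "h (fst z, - snd z) \<in> K" using hc(2) double_broom_uminus K_def by (force simp: mem_Times_iff)
    then show "h' z \<in> K" using double_broom_uminus K_def by (simp add: h'_def)
  qed
  have hom: "deformation K h'" unfolding deformation_def using cont img hc(3) double_broom_uminus by (auto simp: h'_def K_def)
  have fx: "\<forall>t\<in>{0..1}. \<forall>a\<in>uminus ` A. h' (t, a) = a" using h(2) by (auto simp: h'_def)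
  define U' where "U' = K \<inter> uminus -` U"
  have U': "openin (top_of_set K) U'"
  proof -
    obtain O1 where "open O1" "U = K \<inter> O1" using h(3) by (auto simp: openin_open)
    then have "U' = K \<inter> uminus -` O1" using double_broom_uminus by (auto simp: U'_def K_def)
    moreover have "open (uminus -` O1 :: (real \<times> real) set)"
      using \<open>open O1\<close> by (intro continuous_open_vimage continuous_intros) auto
    ultimately show ?thesis by (auto intro: openin_open_Int)
  qed
  have pK: "p \<in> K" using h(3,4) openin_imp_subset by blast
  have pU: "- p \<in> U'" using h(4) pK double_broom_uminus by (simp add: U'_def K_def)
  have const: "\<forall>u\<in>U'. h' (1, u) = h' (1, - p)" using h(5) by (simp add: U'_def h'_def)
  have mv: "h' (1, - p) \<noteq> - p" using h(6) by (simp add: h'_def)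
  show ?thesis unfolding collapsible_moving_def K_def[symmetric] using hom fx U' pU const mv by blast
qed

lemma collapsible_moving_double_broom:
  assumes p: "p \<in> double_broom" "p \<noteq> (0,0)"
  shows "collapsible_moving double_broom p {(0,0)}"
proof -
  from p consider "p \<in> upper_broom" | "p \<in> uminus ` upper_broom" unfolding double_broom_upper_lower by blast
  then show ?thesis
  proof cases
    case 1 then show ?thesis using collapsible_moving_upper_broom p by blast
  next
    case 2
    then have "- p \<in> upper_broom" "- p \<noteq> (0,0)" using p by auto
    then have "collapsible_moving double_broom (- p) {(0,0)}" using collapsible_moving_upper_broom by blast
    from collapsible_moving_uminus[OF this] show ?thesis by simp
  qed
qed

section \<open>Embedded double brooms\<close>

lemma path_first_departure:
  fixes \<gamma> :: "real \<Rightarrow> 'a::metric_space"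
  assumes \<gamma>: "continuous_on {0..1} \<gamma>" "\<gamma> 0 = m" and t: "t \<in> {0..1}" "\<gamma> t \<noteq> m" and \<delta>: "\<delta> > 0"
  shows "\<exists>t'\<in>{0..1}. \<gamma> t' \<noteq> m \<and> (\<forall>s\<in>{0..t'}. dist (\<gamma> s) m < \<delta>)"
proof -
  define T where "T = {s \<in> {0..1}. \<gamma> s \<noteq> m}"
  define \<tau> where "\<tau> = Inf T"
  have Tne: "T \<noteq> {}" using t by (auto simp: T_def)
  have Tb: "bdd_below T" unfolding T_def by (rule bdd_belowI[of _ 0]) auto
  have below: "\<gamma> s = m" if "s \<in> {0..1}" "s < \<tau>" for s
    using cInf_lower[OF _ Tb] that \<tau>_def T_def by force
  have \<tau>: "\<tau> \<in> {0..1}"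
  proof -
    have "\<tau> \<le> t" using cInf_lower[OF _ Tb] t by (auto simp: \<tau>_def T_def)
    moreover have "0 \<le> \<tau>" unfolding \<tau>_def using Tne by (rule cInf_greatest) (auto simp: T_def)
    ultimately show ?thesis using t by auto
  qed
  obtain \<epsilon> where \<epsilon>: "\<epsilon> > 0" "\<forall>s\<in>{0..1}. dist s \<tau> < \<epsilon> \<longrightarrow> dist (\<gamma> s) (\<gamma> \<tau>) < \<delta> / 2"
    using \<gamma>(1) \<tau> \<delta> unfolding continuous_on_iff by (metis half_gt_zero)
  have \<gamma>\<tau>: "dist (\<gamma> \<tau>) m < \<delta> / 2"
  proof (cases "\<tau> = 0")
    case False
    define s where "s = max 0 (\<tau> - \<epsilon> / 2)"
    have s: "s \<in> {0..1}" "s < \<tau>" "dist s \<tau> < \<epsilon>" using \<tau> False \<epsilon> by (auto simp: s_def dist_real_def)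
    then show ?thesis using below[of s] \<epsilon>(2) by (auto simp: dist_commute)
  qed (use \<gamma>(2) \<delta> in simp)
  obtain t' where t': "t' \<in> T" "t' < \<tau> + \<epsilon>"
    using cInf_lessD[OF Tne, of "\<tau> + \<epsilon>"] \<epsilon>(1) by (auto simp: \<tau>_def)
  have "\<tau> \<le> t'" using cInf_lower[OF t'(1) Tb] by (simp add: \<tau>_def)
  have "dist (\<gamma> s) m < \<delta>" if s: "s \<in> {0..t'}" for s
  proof (cases "s < \<tau>")
    case True then show ?thesis using below[of s] s t' \<delta> by (auto simp: T_def)
  next
    case False
    then have "dist (\<gamma> s) (\<gamma> \<tau>) < \<delta> / 2"
      using \<epsilon>(2) s t' \<open>\<tau> \<le> t'\<close> by (auto simp: T_def dist_real_def)
    then show ?thesis using \<gamma>\<tau> dist_triangle[of "\<gamma> s" m "\<gamma> \<tau>"] by linarith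
  qed
  then show ?thesis using t' by (auto simp: T_def)
qed

text \<open>The openness assumption says that the copy of the double broom meets the rest of Y only in the
  image of its center.\<close>
locale broom_embedding =
  fixes e :: "real \<times> real \<Rightarrow> 'a::real_normed_vector" and Y :: "'a set"
  assumes ec: "continuous_on double_broom e" and inj: "inj_on e double_broom"
    and sub: "e ` double_broom \<subseteq> Y" and op: "openin (top_of_set Y) (e ` double_broom - {e (0,0)})"
begin

lemma openin_bristle_image:
  assumes n: "n \<ge> 1"
  shows "openin (top_of_set Y) (e ` (bristle n - {broom_tip}))"
proof -
  have eq: "e ` (bristle n - {broom_tip}) = (e ` double_broom - {e (0,0)}) - (Y \<inter> e ` other_bristles n)"
  proof (rule set_eqI)
    fix y
    show "y \<in> e ` (bristle n - {broom_tip}) \<longleftrightarrow> y \<in> (e ` double_broom - {e (0,0)}) - (Y \<inter> e ` other_bristles n)"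
    proof
      assume "y \<in> e ` (bristle n - {broom_tip})"
      then obtain x where x: "x \<in> bristle n" "x \<noteq> broom_tip" "y = e x" by auto
      have xK: "x \<in> double_broom" using x bristle_subset_double_broom by blast
      have "x \<noteq> (0,0)" using x center_notin_bristle[OF n] by auto
      then have "y \<noteq> e (0,0)" using inj x xK center_in_double_broom by (auto simp: inj_on_def)
      moreover have "y \<notin> e ` other_bristles n"
      proof
        assume "y \<in> e ` other_bristles n"
        then obtain x' where "x' \<in> other_bristles n" "y = e x'" by auto
        then have "x' = x" using inj x xK double_broom_bristle_split[OF n] by (auto simp: inj_on_def)
        then show False using bristle_Int_other_bristles[OF n] x \<open>x' \<in> other_bristles n\<close> by blast
      qed
      ultimately show "y \<in> (e ` double_broom - {e (0,0)}) - (Y \<inter> e ` other_bristles n)" using x xK by auto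
    next
      assume y: "y \<in> (e ` double_broom - {e (0,0)}) - (Y \<inter> e ` other_bristles n)"
      then obtain x where x: "x \<in> double_broom" "y = e x" by auto
      have "y \<in> Y" using sub x by auto
      then have "x \<notin> other_bristles n" using y x by auto
      then have "x \<in> bristle n" "x \<noteq> broom_tip" using x double_broom_bristle_split[OF n] bristle_Int_other_bristles[OF n] by auto
      then show "y \<in> e ` (bristle n - {broom_tip})" using x by auto
    qed
  qed
  have "closed (e ` other_bristles n)"
    using compact_other_bristles[OF n] ec double_broom_bristle_split[OF n]
    by (intro compact_imp_closed compact_continuous_image) (auto elim: continuous_on_subset)
  then have "closedin (top_of_set Y) (Y \<inter> e ` other_bristles n)" by (simp add: closedin_closed_Int)
  then show ?thesis unfolding eq by (rule openin_diff[OF op])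
qed

lemma closedin_bristle_image:
  assumes n: "n \<ge> 1"
  shows "closedin (top_of_set (Y - {e broom_tip})) (e ` (bristle n - {broom_tip}))"
proof -
  have cs: "closed (e ` bristle n)"
  proof -
    have "continuous_on (bristle n) e" using ec bristle_subset_double_broom by (rule continuous_on_subset)
    then show ?thesis by (intro compact_imp_closed compact_continuous_image) (auto simp: bristle_def)
  qed
  have "e ` (bristle n - {broom_tip}) = (Y - {e broom_tip}) \<inter> e ` bristle n"
  proof (rule set_eqI)
    fix y
    show "y \<in> e ` (bristle n - {broom_tip}) \<longleftrightarrow> y \<in> (Y - {e broom_tip}) \<inter> e ` bristle n"
      using inj bristle_subset_double_broom sub tip_in_bristle unfolding inj_on_def by blast
  qed
  then show ?thesis using cs by (simp add: closedin_closed_Int)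
qed

text \<open>The image of a bristle without its tip is clopen in Y - {e a_0}, so a path from the foot
  that avoids e a_0 stays in it.\<close>
lemma foot_track_in_bristle:
  assumes n: "n \<ge> 1" and h: "deformation Y h" and t1: "t1 \<in> {0..1}"
    and avoid: "\<forall>s\<in>{0..t1}. h (s, e (broom_foot n)) \<noteq> e broom_tip"
  shows "h (t1, e (broom_foot n)) \<in> e ` (bristle n - {broom_tip})"
proof -
  have hc: "continuous_on ({0..1} \<times> Y) h" "h ` ({0..1} \<times> Y) \<subseteq> Y" "\<forall>y\<in>Y. h (0, y) = y"
    using h unfolding deformation_def by auto
  have aK: "broom_foot n \<in> double_broom" using foot_in_bristle bristle_subset_double_broom by blast
  then have aY: "e (broom_foot n) \<in> Y" using sub by auto
  define P where "P = (\<lambda>s. h (s, e (broom_foot n))) ` {0..t1}"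
  have "continuous_on {0..t1} (\<lambda>s. h (s, e (broom_foot n)))"
    by (rule continuous_on_compose2[OF hc(1), of _ "\<lambda>s. (s, e (broom_foot n))"]) (use t1 aY in \<open>auto intro!: continuous_intros\<close>)
  then have "connected P" unfolding P_def by (rule connected_continuous_image) simp
  moreover have PY: "P \<subseteq> Y - {e broom_tip}" unfolding P_def using hc(2) t1 aY avoid by force
  ultimately have cP: "connectedin (top_of_set (Y - {e broom_tip})) P"
    by (simp add: connectedin_subtopology)
  have Wsub: "e ` (bristle n - {broom_tip}) \<subseteq> Y - {e broom_tip}"
    using sub bristle_subset_double_broom inj tip_in_bristle unfolding inj_on_def by blast
  have Wo: "openin (top_of_set (Y - {e broom_tip})) (e ` (bristle n - {broom_tip}))"
    using openin_bristle_image[OF n] Wsub by (metis Diff_subset openin_subset_trans)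
  have "P \<subseteq> e ` (bristle n - {broom_tip}) \<or> disjnt P (e ` (bristle n - {broom_tip}))"
    using connectedin_clopen_cases[OF cP closedin_bristle_image[OF n] Wo] .
  moreover have "e (broom_foot n) \<in> P" unfolding P_def using t1 hc(3) aY by (force intro: image_eqI[of _ _ 0])
  moreover have "e (broom_foot n) \<in> e ` (bristle n - {broom_tip})" using foot_in_bristle by (auto simp: broom_foot_def broom_tip_def)
  ultimately have "P \<subseteq> e ` (bristle n - {broom_tip})" by (auto simp: disjnt_def)
  then show ?thesis unfolding P_def using t1 by auto
qed

lemma foot_image_tendsto: "((\<lambda>n. e (broom_foot n)) \<longlongrightarrow> e (0,0)) sequentially"
proof (rule continuous_on_tendsto_compose[OF ec broom_foot_tendsto center_in_double_broom])
  show "\<forall>\<^sub>F n in sequentially. broom_foot n \<in> double_broom" using foot_in_bristle bristle_subset_double_broom by (intro always_eventually) blast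
qed

lemma deformation_foot_uniform:
  assumes h: "deformation Y h" and eps: "\<epsilon> > 0"
  shows "\<exists>N. \<forall>n\<ge>N. \<forall>s\<in>{0..1}. dist (h (s, e (broom_foot n))) (h (s, e (0,0))) < \<epsilon>"
proof -
  have hc: "continuous_on ({0..1} \<times> Y) h" using h unfolding deformation_def by auto
  have cK: "compact (e ` double_broom)" using compact_continuous_image[OF ec compact_double_broom] .
  have "continuous_on ({0..1} \<times> e ` double_broom) h"
    using continuous_on_subset[OF hc] sub by (meson Sigma_mono order_refl)
  then have "uniformly_continuous_on ({0..1} \<times> e ` double_broom) h"
    using cK by (intro compact_uniformly_continuous compact_Times) auto
  then obtain d where d: "d > 0" "\<forall>x\<in>{0..1} \<times> e ` double_broom. \<forall>x'\<in>{0..1} \<times> e ` double_broom.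
      dist x' x < d \<longrightarrow> dist (h x') (h x) < \<epsilon>"
    using eps unfolding uniformly_continuous_on_def by blast
  obtain N where N: "\<forall>n\<ge>N. dist (e (broom_foot n)) (e (0,0)) < d"
    using foot_image_tendsto d(1) unfolding tendsto_iff eventually_sequentially by blast
  have "\<forall>n\<ge>N. \<forall>s\<in>{0..1}. dist (h (s, e (broom_foot n))) (h (s, e (0,0))) < \<epsilon>"
  proof (intro allI impI ballI)
    fix n s assume n: "n \<ge> N" and s: "s \<in> {0..(1::real)}"
    have m1: "(s, e (broom_foot n)) \<in> {0..1} \<times> e ` double_broom" using s foot_in_bristle bristle_subset_double_broom by blast
    have m2: "(s, e (0,0)) \<in> {0..1} \<times> e ` double_broom" using s center_in_double_broom by blast
    have "dist (s, e (broom_foot n)) (s, e (0,0)) < d" using N n by (simp add: dist_Pair_Pair)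
    then show "dist (h (s, e (broom_foot n))) (h (s, e (0,0))) < \<epsilon>" using d(2) m1 m2 by blast
  qed
  then show ?thesis by blast
qed

lemma center_track_near_bristles:
  assumes h: "deformation Y h" and t1: "t1 \<in> {0..1}"
    and \<delta>: "0 < \<delta>" "2 * \<delta> \<le> dist (e (0,0)) (e broom_tip)"
    and close: "\<forall>s\<in>{0..t1}. dist (h (s, e (0,0))) (e (0,0)) < \<delta>" and \<epsilon>: "\<epsilon> > 0"
  shows "\<exists>n\<ge>M. \<exists>q\<in>bristle n. dist (e q) (h (t1, e (0,0))) < \<epsilon>"
proof -
  obtain N where N: "\<forall>n\<ge>N. \<forall>s\<in>{0..1}. dist (h (s, e (broom_foot n))) (h (s, e (0,0))) < min \<epsilon> \<delta>"
    using deformation_foot_uniform[OF h, of "min \<epsilon> \<delta>"] \<epsilon> \<delta> by auto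
  define n where "n = max (max N M) 1"
  have n: "n \<ge> 1" "n \<ge> N" "n \<ge> M" by (auto simp: n_def)
  have avoid: "\<forall>s\<in>{0..t1}. h (s, e (broom_foot n)) \<noteq> e broom_tip"
  proof (intro ballI notI)
    fix s assume s: "s \<in> {0..t1}" and eq: "h (s, e (broom_foot n)) = e broom_tip"
    have "dist (e broom_tip) (e (0,0))
        \<le> dist (h (s, e (broom_foot n))) (h (s, e (0,0))) + dist (h (s, e (0,0))) (e (0,0))"
      using eq dist_triangle by metis
    also have "\<dots> < \<delta> + \<delta>" using N n s t1 close by (intro add_strict_mono) force+
    finally show False using \<delta> by (simp add: dist_commute)
  qed
  obtain q where q: "q \<in> bristle n" "h (t1, e (broom_foot n)) = e q"
    using foot_track_in_bristle[OF n(1) h t1 avoid] by auto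
  have "dist (e q) (h (t1, e (0,0))) < \<epsilon>" using N n t1 q by force
  then show ?thesis using n q by blast
qed

lemma center_track_on_upper_axis:
  assumes h: "deformation Y h" and t1: "t1 \<in> {0..1}"
    and \<delta>: "0 < \<delta>" "2 * \<delta> \<le> dist (e (0,0)) (e broom_tip)"
    and close: "\<forall>s\<in>{0..t1}. dist (h (s, e (0,0))) (e (0,0)) < \<delta>"
  shows "\<exists>q\<in>double_broom. h (t1, e (0,0)) = e q \<and> fst q = 0 \<and> 0 \<le> snd q"
proof -
  define z where "z = h (t1, e (0,0))"
  note near = center_track_near_bristles[OF h t1 \<delta> close, folded z_def]
  have "closed (e ` double_broom)"
    using compact_continuous_image[OF ec compact_double_broom] compact_imp_closed by blast
  moreover have "z \<in> closure (e ` double_broom)"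
    unfolding closure_approachable
  proof (intro allI impI)
    fix \<epsilon> :: real assume "\<epsilon> > 0"
    then obtain n q where "q \<in> bristle n" "dist (e q) z < \<epsilon>" using near[of \<epsilon> 0] by blast
    then show "\<exists>y\<in>e ` double_broom. dist y z < \<epsilon>" using bristle_subset_double_broom by blast
  qed
  ultimately have "z \<in> e ` double_broom" by (simp add: closure_closed)
  then obtain q where q: "q \<in> double_broom" "z = e q" by blast
  define e' where "e' = the_inv_into double_broom e"
  have e'c: "continuous_on (e ` double_broom) e'" unfolding e'_def
    using continuous_on_inv_into[OF ec compact_double_broom inj] .
  have e'e: "e' (e x) = x" if "x \<in> double_broom" for x
    unfolding e'_def using the_inv_into_f_f[OF inj that] .
  have "\<exists>n\<ge>M. \<exists>q'\<in>bristle n. dist q' q < \<epsilon>" if "\<epsilon> > 0" for \<epsilon> M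
  proof -
    obtain \<rho> where \<rho>: "\<rho> > 0" "\<forall>w\<in>e ` double_broom. dist w z < \<rho> \<longrightarrow> dist (e' w) (e' z) < \<epsilon>"
      using e'c \<open>z \<in> e ` double_broom\<close> \<open>\<epsilon> > 0\<close> unfolding continuous_on_iff by blast
    obtain n q' where nq: "n \<ge> M" "q' \<in> bristle n" "dist (e q') z < \<rho>" using near[OF \<rho>(1)] by blast
    have "q' \<in> double_broom" using nq(2) bristle_subset_double_broom by blast
    then have "dist (e' (e q')) (e' z) < \<epsilon>" using \<rho>(2) nq(3) by blast
    then have "dist q' q < \<epsilon>" using e'e[OF \<open>q' \<in> double_broom\<close>] e'e[OF q(1)] q(2) by simp
    then show ?thesis using nq by blast
  qed
  then have "fst q = 0 \<and> 0 \<le> snd q" by (rule bristles_limit_on_upper_axis)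
  then show ?thesis using q unfolding z_def by blast
qed

end

lemma broom_embedding_uminus:
  assumes "broom_embedding e Y"
  shows "broom_embedding (\<lambda>q. e (- q)) Y"
proof -
  interpret broom_embedding e Y by fact
  have im: "(\<lambda>q. e (- q)) ` double_broom = e ` double_broom"
    using uminus_double_broom by (metis image_image)
  show ?thesis
  proof
    show "continuous_on double_broom (\<lambda>q. e (- q))"
      by (rule continuous_on_compose2[OF ec]) (auto intro: continuous_intros simp: double_broom_uminus image_subset_iff)
    show "inj_on (\<lambda>q. e (- q)) double_broom"
      using inj double_broom_uminus unfolding inj_on_def by fastforce
    show "(\<lambda>q. e (- q)) ` double_broom \<subseteq> Y" using im sub by simp
    show "openin (top_of_set Y) ((\<lambda>q. e (- q)) ` double_broom - {e (- (0,0))})" using im op by simp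
  qed
qed

context broom_embedding
begin

lemma center_track_fixed:
  assumes h: "deformation Y h" and t1: "t1 \<in> {0..1}" and del: "0 < \<delta>" "2 * \<delta> \<le> dist (e (0,0)) (e broom_tip)"
    "2 * \<delta> \<le> dist (e (0,0)) (e (- broom_tip))"
    and close: "\<forall>s\<in>{0..t1}. dist (h (s, e (0,0))) (e (0,0)) < \<delta>"
  shows "h (t1, e (0,0)) = e (0,0)"
proof -
  interpret N: broom_embedding "\<lambda>q. e (- q)" Y using broom_embedding_uminus broom_embedding_axioms by blast
  obtain q where q: "q \<in> double_broom" "h (t1, e (0,0)) = e q" "fst q = 0" "0 \<le> snd q"
    using center_track_on_upper_axis[OF h t1 del(1,2) close] by blast
  have "\<exists>q\<in>double_broom. h (t1, e (- (0,0))) = e (- q) \<and> fst q = 0 \<and> 0 \<le> snd q"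
    using N.center_track_on_upper_axis[OF h t1 del(1)] del close by simp
  then obtain q2 where q2: "q2 \<in> double_broom" "h (t1, e (- (0,0))) = e (- q2)" "fst q2 = 0" "0 \<le> snd q2"
    by blast
  have "e q = e (- q2)" using q q2 by simp
  then have "q = - q2" using inj q(1) double_broom_uminus[OF q2(1)] unfolding inj_on_def by blast
  then have "q = (0,0)" using q q2 by (simp add: prod_eq_iff)
  then show ?thesis using q by simp
qed

lemma center_in_hf: "e (0,0) \<in> hf Y"
  unfolding hf_iff_deformation
proof (intro CollectI conjI allI impI ballI)
  show "e (0,0) \<in> Y" using sub center_in_double_broom by blast
  fix h t assume h: "deformation Y h" and t: "t \<in> {0..(1::real)}"
  define \<delta> where "\<delta> = min (dist (e (0,0)) (e broom_tip)) (dist (e (0,0)) (e (- broom_tip))) / 2"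
  have "broom_tip \<in> double_broom" "- broom_tip \<in> double_broom"
    using tip_in_bristle bristle_subset_double_broom double_broom_uminus by blast+
  moreover have "broom_tip \<noteq> (0,0)" "- broom_tip \<noteq> (0,0)" by (auto simp: broom_tip_def)
  ultimately have "e broom_tip \<noteq> e (0,0)" "e (- broom_tip) \<noteq> e (0,0)"
    using inj center_in_double_broom unfolding inj_on_def by metis+
  then have \<delta>: "0 < \<delta>" "2 * \<delta> \<le> dist (e (0,0)) (e broom_tip)" "2 * \<delta> \<le> dist (e (0,0)) (e (- broom_tip))"
    by (auto simp: \<delta>_def)
  have hc: "continuous_on ({0..1} \<times> Y) h" "\<forall>y\<in>Y. h (0, y) = y" using h unfolding deformation_def by auto
  have cont: "continuous_on {0..1} (\<lambda>s. h (s, e (0,0)))"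
    by (rule continuous_on_compose2[OF hc(1)]) (use \<open>e (0,0) \<in> Y\<close> in \<open>auto intro!: continuous_intros\<close>)
  have h0: "h (0, e (0,0)) = e (0,0)" using hc(2) \<open>e (0,0) \<in> Y\<close> by blast
  show "h (t, e (0,0)) = e (0,0)"
  proof (rule ccontr)
    assume "h (t, e (0,0)) \<noteq> e (0,0)"
    then obtain t' where t': "t' \<in> {0..1}" "h (t', e (0,0)) \<noteq> e (0,0)"
      "\<forall>s\<in>{0..t'}. dist (h (s, e (0,0))) (e (0,0)) < \<delta>"
      using path_first_departure[OF cont h0 t] \<delta>(1) by blast
    then show False using center_track_fixed[OF h t'(1) \<delta> t'(3)] by blast
  qed
qed

lemma center_not_collapsible_onto: "\<not> collapsible_onto Y (e (0,0))"
  unfolding collapsible_onto_def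
proof
  assume "\<exists>h U. deformation Y h \<and> openin (top_of_set Y) U \<and> e (0,0) \<in> U \<and> (\<forall>u\<in>U. h (1, u) = e (0,0))"
  then obtain h U where h: "deformation Y h" "openin (top_of_set Y) U" "e (0,0) \<in> U" "\<forall>u\<in>U. h (1, u) = e (0,0)"
    by blast
  define m where "m = e (0,0)"
  have "broom_tip \<noteq> (0,0)" by (auto simp: broom_tip_def)
  moreover have "broom_tip \<in> double_broom" using tip_in_bristle bristle_subset_double_broom by blast
  ultimately have "e broom_tip \<noteq> m" using inj center_in_double_broom unfolding inj_on_def m_def by metis
  then have dpos: "dist m (e broom_tip) > 0" by simp
  obtain N where N: "\<forall>n\<ge>N. \<forall>s\<in>{0..1}. dist (h (s, e (broom_foot n))) (h (s, m)) < dist m (e broom_tip)"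
    using deformation_foot_uniform[OF h(1) dpos] m_def by blast
  obtain O1 where O1: "open O1" "U = Y \<inter> O1" using h(2) by (auto simp: openin_open)
  have "m \<in> O1" using h(3) O1 m_def by auto
  then have "\<forall>\<^sub>F n in sequentially. e (broom_foot n) \<in> O1" using foot_image_tendsto O1(1) m_def
    by (simp add: tendsto_def)
  then obtain N2 where N2: "\<forall>n\<ge>N2. e (broom_foot n) \<in> O1" unfolding eventually_sequentially by blast
  define n where "n = max (max N N2) 1"
  have n: "n \<ge> 1" "n \<ge> N" "n \<ge> N2" by (auto simp: n_def)
  have aK: "broom_foot n \<in> double_broom" using foot_in_bristle bristle_subset_double_broom by blast
  have aU: "e (broom_foot n) \<in> U" using N2 n O1 sub aK by auto
  have mhf: "m \<in> hf Y" using center_in_hf m_def by simp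
  have avoid: "\<forall>s\<in>{0..1}. h (s, e (broom_foot n)) \<noteq> e broom_tip"
  proof (intro ballI notI)
    fix s assume s: "s \<in> {0..(1::real)}" and eq: "h (s, e (broom_foot n)) = e broom_tip"
    have "h (s, m) = m" using hf_deformation_fixed[OF mhf h(1) s] .
    then have "dist (e broom_tip) m < dist m (e broom_tip)" using N n s eq by force
    then show False by (simp add: dist_commute)
  qed
  have "h (1, e (broom_foot n)) \<in> e ` (bristle n - {broom_tip})" using foot_track_in_bristle[OF n(1) h(1) _ avoid] by simp
  moreover have "h (1, e (broom_foot n)) = e (0,0)" using h(4) aU by blast
  ultimately have "e (0,0) \<in> e ` bristle n" by auto
  then obtain x where "x \<in> bristle n" "e x = e (0,0)" by auto
  then have "x = (0,0)" using inj center_in_double_broom bristle_subset_double_broom unfolding inj_on_def by blast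
  then show False using \<open>x \<in> bristle n\<close> center_notin_bristle[OF n(1)] by simp
qed

lemma collapsible_moving_broom:
  assumes p: "p \<in> double_broom" "p \<noteq> (0,0)"
  shows "collapsible_moving Y (e p) {}"
  by (rule collapsible_moving_embedding[OF compact_double_broom ec inj sub op center_in_double_broom p collapsible_moving_double_broom[OF p]])

end

section \<open>The hairy disk\<close>

locale hairy_disk_setting =
  fixes m :: "nat \<Rightarrow> real \<times> real" and e :: "nat \<Rightarrow> real \<times> real \<Rightarrow> real \<times> real"
  assumes hdd: "hairy_disk_data m e"
begin

definition HD where "HD = hairy_disk m e"

lemma
  shows m_sph: "range m \<subseteq> sphere 0 1" and m_dense: "sphere 0 1 \<subseteq> closure (range m)"
    and e_cont: "\<And>i. continuous_on double_broom (e i)" and e_inj: "\<And>i. inj_on (e i) double_broom"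
    and e_v: "\<And>i. e i (0,0) = m i"
    and e_disj: "\<And>i j. i \<noteq> j \<Longrightarrow> e i ` double_broom \<inter> e j ` double_broom = {}"
    and e_ball: "\<And>i. e i ` double_broom \<inter> cball 0 1 = {m i}"
    and e_diam: "(\<lambda>i. diameter (e i ` double_broom)) \<longlonglongrightarrow> 0"
  using hdd unfolding hairy_disk_data_def by auto

lemma HD_eq: "HD = cball 0 1 \<union> (\<Union>i. e i ` double_broom)"
  unfolding HD_def hairy_disk_def by simp

lemma compact_hair: "compact (e i ` double_broom)"
  using compact_continuous_image[OF e_cont compact_double_broom] .

lemma m_in_hair: "m i \<in> e i ` double_broom"
  using e_v center_in_double_broom by (metis image_eqI)

lemma norm_m: "norm (m i) = 1" using m_sph by (metis (no_types, lifting) dist_0_norm mem_sphere rangeI subsetD)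

lemma hair_dist_m: "x \<in> e i ` double_broom \<Longrightarrow> dist x (m i) \<le> diameter (e i ` double_broom)"
  using diameter_bounded_bound[OF compact_imp_bounded[OF compact_hair] _ m_in_hair] by blast

lemma hair_norm_gt: "x \<in> e i ` double_broom \<Longrightarrow> x \<noteq> m i \<Longrightarrow> norm x > 1"
  using e_ball[of i] by (force simp: dist_norm)

lemma hair_norm_ge: "x \<in> e i ` double_broom \<Longrightarrow> norm x \<ge> 1"
  using hair_norm_gt[of x i] norm_m by (cases "x = m i") auto

lemma bounded_HD: "bounded HD"
proof -
  obtain B where B: "\<forall>i. norm (diameter (e i ` double_broom)) \<le> B"
    using convergent_imp_bounded[OF e_diam] unfolding bounded_iff by auto
  have "HD \<subseteq> cball 0 (1 + B)"
  proof
    fix x assume "x \<in> HD"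
    then consider "x \<in> cball 0 1" | i where "x \<in> e i ` double_broom" unfolding HD_eq by auto
    then show "x \<in> cball 0 (1 + B)"
    proof cases
      case 1 then show ?thesis using B[rule_format, of 0] by auto
    next
      case 2
      have "norm x \<le> norm (m i) + dist x (m i)" by (metis dist_norm norm_triangle_sub add.commute)
      also have "\<dots> \<le> 1 + B" using hair_dist_m[OF 2] B[rule_format, of i] norm_m[of i] by auto
      finally show ?thesis by simp
    qed
  qed
  then show ?thesis using bounded_cball bounded_subset by blast
qed

lemma diameter_HD_ge: "diameter HD \<ge> 2"
proof -
  have a: "(1,0) \<in> HD" "(-1,0) \<in> HD" unfolding HD_eq by auto
  have "dist (1::real,0::real) (-1,0) = 2" by (simp add: dist_Pair_Pair dist_real_def)
  then show ?thesis using diameter_bounded_bound[OF bounded_HD a] by simp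
qed

lemma hairs_separated:
  fixes J :: "nat set" and q :: "real \<times> real"
  assumes q: "norm q > 1" and qn: "\<forall>j\<in>J. q \<notin> e j ` double_broom"
  shows "\<exists>\<rho>>0. \<forall>j\<in>J. \<forall>x\<in>e j ` double_broom. dist x q \<ge> \<rho>"
proof -
  define \<delta> where "\<delta> = norm q - 1"
  have d: "\<delta> > 0" using q by (simp add: \<delta>_def)
  obtain N where N: "\<forall>j\<ge>N. diameter (e j ` double_broom) < \<delta> / 2"
    using e_diam d unfolding lim_sequentially by (metis dist_real_def diff_zero half_gt_zero abs_of_nonneg diameter_ge_0 compact_hair compact_imp_bounded)
  define F where "F = (\<Union>j\<in>J \<inter> {..<N}. e j ` double_broom)"
  have "compact F" unfolding F_def by (intro compact_UN compact_hair) auto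
  moreover have "q \<notin> F" using qn by (auto simp: F_def)
  ultimately obtain \<rho>1 where r1: "\<rho>1 > 0" "\<forall>x\<in>F. \<rho>1 \<le> dist x q"
    using compact_imp_closed
    by (metis dist_commute separate_point_closed)
  define \<rho> where "\<rho> = min \<rho>1 (\<delta> / 2)"
  have "\<forall>j\<in>J. \<forall>x\<in>e j ` double_broom. dist x q \<ge> \<rho>"
  proof (intro ballI)
    fix j x assume j: "j \<in> J" and x: "x \<in> e j ` double_broom"
    show "dist x q \<ge> \<rho>"
    proof (cases "j < N")
      case True
      then have "x \<in> F" using j x by (auto simp: F_def)
      then have "\<rho>1 \<le> dist x q" using r1 by blast
      then show ?thesis by (simp add: \<rho>_def)
    next
      case False
      then have "diameter (e j ` double_broom) < \<delta> / 2" using N by simp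
      then have "dist x (m j) < \<delta> / 2" using hair_dist_m[OF x] by linarith
      then have "norm x < 1 + \<delta> / 2" using norm_m[of j] by (metis dist_norm norm_triangle_sub add.commute order.strict_trans1 add_le_less_mono order_refl)
      then have "dist x q > \<delta> / 2" unfolding \<delta>_def using norm_triangle_sub[of q x]
        by (simp add: dist_norm norm_minus_commute field_simps)
      then show ?thesis by (simp add: \<rho>_def)
    qed
  qed
  then show ?thesis using r1 d by (intro exI[of _ \<rho>]) (auto simp: \<rho>_def)
qed

lemma HD_locally_hair:
  assumes q: "q \<in> e i ` double_broom" "q \<noteq> m i"
  shows "\<exists>\<rho>>0. \<forall>x\<in>HD. dist x q < \<rho> \<longrightarrow> x \<in> e i ` double_broom \<and> x \<noteq> m i"
proof -
  have nq: "norm q > 1" using hair_norm_gt[OF q] .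
  have "\<forall>j\<in>-{i}. q \<notin> e j ` double_broom" using e_disj q by blast
  then obtain \<rho> where r: "\<rho> > 0" "\<forall>j\<in>-{i}. \<forall>x\<in>e j ` double_broom. dist x q \<ge> \<rho>"
    using hairs_separated[OF nq] by blast
  define \<rho>' where "\<rho>' = min \<rho> (min (norm q - 1) (dist q (m i)))"
  have r': "\<rho>' > 0" using r nq q by (simp add: \<rho>'_def)
  have "\<forall>x\<in>HD. dist x q < \<rho>' \<longrightarrow> x \<in> e i ` double_broom \<and> x \<noteq> m i"
  proof (intro ballI impI)
    fix x assume x: "x \<in> HD" "dist x q < \<rho>'"
    have "norm x > 1"
    proof -
      have "norm q \<le> norm x + dist x q" by (metis dist_norm norm_minus_commute norm_triangle_sub add.commute)
      then show ?thesis using x(2) by (simp add: \<rho>'_def)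
    qed
    then have "x \<notin> cball 0 1" by simp
    then obtain j where j: "x \<in> e j ` double_broom" using x(1) unfolding HD_eq by auto
    have "j = i" using r j x(2) by (metis ComplI min.strict_boundedE not_le singletonD \<rho>'_def)
    moreover have "x \<noteq> m i" using x(2) by (auto simp: \<rho>'_def dist_commute)
    ultimately show "x \<in> e i ` double_broom \<and> x \<noteq> m i" using j by simp
  qed
  then show ?thesis using r' by blast
qed

end

section \<open>Chains of hairy disks\<close>

definition axis :: "real set \<Rightarrow> (real \<times> real \<times> real) set" where
  "axis I = (\<lambda>x. (x, 0)) ` I"

definition plane_gap :: "nat \<Rightarrow> real" where "plane_gap k = 1 / (real k * (real k + 1))"

lemma plane_gap_pos: "k \<ge> 1 \<Longrightarrow> plane_gap k > 0" by (simp add: plane_gap_def)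

lemma plane_gap_le: "k \<ge> 1 \<Longrightarrow> plane_gap k \<le> 1/2"
proof -
  assume k: "k \<ge> 1"
  then have k1: "real k \<ge> 1" by simp
  have "1 * 2 \<le> real k * (real k + 1)" by (rule mult_mono) (use k1 in auto)
  then have "real k * (real k + 1) \<ge> 2" by simp
  then show ?thesis by (simp add: plane_gap_def field_simps)
qed

lemma inverse_diff_ge_left: fixes a b :: real assumes "a \<ge> 1" "a + 1 \<le> b" shows "1/a - 1/b \<ge> 1/(b*(b+1))"
proof -
  have "b + 1 \<le> (b - a) * (b + 1)" using mult_right_mono[of 1 "b-a" "b+1"] assms by simp
  then have i: "a \<le> (b - a) * (b + 1)" using assms by linarith
  have eq: "1/a - 1/b = (b - a)/(a*b)" using assms by (simp add: field_simps)
  have "b * a \<le> b * ((b - a) * (b + 1))" using mult_left_mono[OF i, of b] assms by simp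
  then have "a * b \<le> (b - a) * (b * (b + 1))" by (simp add: algebra_simps)
  then have "1/(b*(b+1)) \<le> (b - a)/(a*b)" using assms by (simp add: divide_simps)
  then show ?thesis using eq by simp
qed

lemma inverse_diff_ge_right: fixes a b :: real assumes "b \<ge> 1" "b + 1 \<le> a" shows "1/b - 1/a \<ge> 1/(b*(b+1))"
proof -
  have "b * (a - b - 1) \<ge> 0" using assms by simp
  then have i: "a \<le> (a - b) * (b + 1)" by (simp add: algebra_simps)
  have eq: "1/b - 1/a = (a - b)/(a*b)" using assms by (simp add: field_simps)
  have "b * a \<le> b * ((a - b) * (b + 1))" using mult_left_mono[OF i, of b] assms by simp
  then have "a * b \<le> (a - b) * (b * (b + 1))" by (simp add: algebra_simps)
  then have "1/(b*(b+1)) \<le> (a - b)/(a*b)" using assms by (simp add: divide_simps)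
  then show ?thesis using eq by simp
qed

lemma plane_gap_inverse:
  assumes j: "j \<ge> 1" and k: "k \<ge> 1" and jk: "j \<noteq> k"
  shows "\<bar>1 / real j - 1 / real k\<bar> \<ge> plane_gap k"
proof (cases "j < k")
  case True
  then have "real j + 1 \<le> real k" by linarith
  then have "1/real j - 1/real k \<ge> plane_gap k" using inverse_diff_ge_left[of "real j" "real k"] j by (simp add: plane_gap_def)
  then show ?thesis by linarith
next
  case False
  then have "real k + 1 \<le> real j" using jk by linarith
  then have "1/real k - 1/real j \<ge> plane_gap k" using inverse_diff_ge_right[of "real k" "real j"] k by (simp add: plane_gap_def)
  then show ?thesis by linarith
qed

lemma closed_segment_axis: "closed_segment (a, 0::real\<times>real) (b, 0) = axis (closed_segment a b)"
  unfolding axis_def closed_segment_def by (auto simp: image_iff)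

lemma axis_segments_union: "(\<Union>k\<in>{1::nat..}. closed_segment (cpt k) (cpt (k + 1))) = axis {-1..<0}"
proof -
  have seg: "closed_segment (cpt k) (cpt (k + 1)) = axis {-1 / real k..-1 / real (k+1)}" if k: "k \<ge> 1" for k
  proof -
    have "-1 / real k \<le> -1 / real (k+1)" using k by (simp add: field_simps)
    then show ?thesis unfolding cpt_def using closed_segment_axis[of "-1 / real k" "-1 / real (k+1)"]
      by (simp add: zero_prod_def closed_segment_eq_real_ivl)
  qed
  have "(\<Union>k\<in>{1::nat..}. {-1 / real k..-1 / real (k+1)}) = {-1..<0}"
  proof (rule set_eqI, rule iffI)
    fix x assume "x \<in> (\<Union>k\<in>{1::nat..}. {-1 / real k..-1 / real (k+1)})"
    then obtain k where k: "k \<ge> 1" "-1 / real k \<le> x" "x \<le> -1 / real (k+1)" by auto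
    have "-1 \<le> -1 / real k" using k by (simp add: field_simps)
    moreover have "-1 / real (k+1) < 0" by simp
    ultimately show "x \<in> {-1..<0}" using k(2,3) by (simp only: atLeastLessThan_iff) linarith
  next
    fix x :: real assume x: "x \<in> {-1..<0}"
    define y where "y = -1 / x"
    have y1: "y \<ge> 1" using x by (simp add: y_def field_simps)
    define k where "k = nat \<lfloor>y\<rfloor>"
    have k1: "k \<ge> 1" using y1 by (simp add: k_def le_nat_iff)
    have ky: "real k \<le> y" "y < real k + 1" using y1 by (auto simp: k_def)
    have "-1 / real k \<le> x"
    proof -
      have "-1 / real k \<le> -1 / y" using ky k1 y1 by (simp add: field_simps)
      then show ?thesis using x by (simp add: y_def)
    qed
    moreover have "x \<le> -1 / real (k+1)"
    proof -
      have "-1 / y \<le> -1 / real (k+1)" using ky y1 by (simp add: field_simps)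
      then show ?thesis using x by (simp add: y_def)
    qed
    ultimately show "x \<in> (\<Union>k\<in>{1::nat..}. {-1 / real k..-1 / real (k+1)})" using k1 by auto
  qed
  then show ?thesis using seg unfolding axis_def by (auto simp: image_UN[symmetric])
qed

context hairy_disk_setting
begin

definition dH where "dH = diameter HD"
definition copy_scale :: "nat \<Rightarrow> real" where "copy_scale k = 1 / (real k * dH)"
definition hcopy :: "nat \<Rightarrow> real \<times> real \<Rightarrow> real \<times> real \<times> real" where "hcopy k p = (- 1 / real k, copy_scale k *\<^sub>R p)"
definition extra_broom :: "(real \<times> real \<times> real) set" where "extra_broom = (\<lambda>p. (-2, p)) ` double_broom"
text \<open>The four spaces of the theorem are chain {-1..<0} False, chain {-2..<0} True,
  chain {-1..0} False and chain {-2..0} True: the copies H(k), the part I of the first axis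
  joining their centers, and possibly the extra broom.\<close>
definition chain :: "real set \<Rightarrow> bool \<Rightarrow> (real \<times> real \<times> real) set" where
  "chain I \<beta> = (\<Union>k\<in>{1..}. hcopy k ` HD) \<union> axis I \<union> (if \<beta> then extra_broom else {})"

lemma dH_ge: "dH \<ge> 2" using diameter_HD_ge by (simp add: dH_def)

lemma copy_scale_pos: "k \<ge> 1 \<Longrightarrow> copy_scale k > 0" using dH_ge by (simp add: copy_scale_def)

lemma copyH_eq_hcopy: "copyH HD k = hcopy k"
  by (rule ext) (simp add: copyH_def hcopy_def copy_scale_def dH_def Let_def prod_eq_iff)

lemma dist_hcopy: "dist (hcopy k p) (hcopy k q) = copy_scale k * dist p q" if "k \<ge> 1"
  using copy_scale_pos[OF that] by (simp add: hcopy_def dist_Pair_Pair dist_norm scaleR_diff_right[symmetric])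

lemma hcopy_inj: "k \<ge> 1 \<Longrightarrow> hcopy k p = hcopy k q \<Longrightarrow> p = q"
  using copy_scale_pos[of k] by (simp add: hcopy_def)

lemma closed_segment_hcopy: "closed_segment (hcopy k p) (hcopy k q) = hcopy k ` closed_segment p q"
proof -
  have "(1 - u) *\<^sub>R hcopy k p + u *\<^sub>R hcopy k q = hcopy k ((1 - u) *\<^sub>R p + u *\<^sub>R q)" for u
    by (simp add: hcopy_def algebra_simps add_divide_distrib[symmetric])
  then show ?thesis unfolding closed_segment_def by (auto simp: image_iff)
qed

lemma continuous_on_hcopy: "continuous_on S (hcopy k)" unfolding hcopy_def by (intro continuous_intros)

lemma fst_hcopy: "fst (hcopy k p) = - 1 / real k" by (simp add: hcopy_def)

lemma abs_fst_diff_le_dist: "dist q y \<ge> \<bar>fst q - fst y\<bar>"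
  by (metis dist_fst_le dist_real_def)

lemma chain_cases:
  assumes "y \<in> chain I \<beta>"
  obtains k p where "k \<ge> 1" "p \<in> HD" "y = hcopy k p" | x where "x \<in> I" "y = (x, 0)"
    | q where "\<beta>" "q \<in> double_broom" "y = (-2, q)"
  using assms unfolding chain_def axis_def extra_broom_def by (auto split: if_splits)

lemma chain_near_plane:
  assumes k: "k \<ge> 1" and yf: "fst y = - 1 / real k" and q: "q \<in> chain I \<beta>" and d: "dist q y < plane_gap k"
  shows "(\<exists>p\<in>HD. q = hcopy k p) \<or> (\<exists>x\<in>I. q = (x, 0))"
  using q
proof (cases rule: chain_cases)
  case (1 j p)
  show ?thesis
  proof (cases "j = k")
    case True then show ?thesis using 1 by blast
  next
    case False
    have "\<bar>fst q - fst y\<bar> = \<bar>1 / real k - 1 / real j\<bar>" using 1 yf by (simp add: fst_hcopy)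
    also have "\<dots> = \<bar>1 / real j - 1 / real k\<bar>" by simp
    finally have "\<bar>fst q - fst y\<bar> \<ge> plane_gap k" using plane_gap_inverse[OF 1(1) k False] by simp
    then show ?thesis using d abs_fst_diff_le_dist[of q y] by linarith
  qed
next
  case (3 q')
  have "1 / real k \<le> 1" using k by simp
  then have "\<bar>fst q - fst y\<bar> \<ge> 1" using 3 yf by simp
  then show ?thesis using d abs_fst_diff_le_dist[of q y] plane_gap_le[OF k] by linarith
qed auto

lemma cball_subset_HD: "cball 0 1 \<subseteq> HD" unfolding HD_eq by auto

lemma hcopy_in_chain: "k \<ge> 1 \<Longrightarrow> p \<in> HD \<Longrightarrow> hcopy k p \<in> chain I \<beta>"
  unfolding chain_def by auto

lemma axis_in_chain: "x \<in> I \<Longrightarrow> (x, 0) \<in> chain I \<beta>"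
  unfolding chain_def axis_def by auto

lemma axis_segment_subset_chain:
  assumes "convex I" "x \<in> I" "x' \<in> I"
  shows "closed_segment (x, 0) (x', 0) \<subseteq> chain I \<beta>"
proof -
  have "closed_segment x x' \<subseteq> I" using assms closed_segment_subset by blast
  then show ?thesis unfolding closed_segment_axis chain_def axis_def by auto
qed

lemma hcopy_0: "hcopy k 0 = (- 1 / real k, 0)" by (simp add: hcopy_def)

lemma collapsible_moving_disk:
  assumes I: "convex I" "{-1..<0} \<subseteq> I" and k: "k \<ge> 1" and p: "norm p < 1"
  shows "collapsible_moving (chain I \<beta>) (hcopy k p) {}"
proof -
  define r where "r = min (plane_gap k) (min (copy_scale k * (1 - norm p)) (if p = 0 then 1 else copy_scale k * norm p))"
  have r: "r > 0" using plane_gap_pos[OF k] copy_scale_pos[OF k] p by (simp add: r_def)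
  define t :: "real \<times> real" where "t = (if p = 0 then (1/2, 0) else 0)"
  have tp: "t \<noteq> p" "norm t < 1" by (auto simp: t_def zero_prod_def)
  have pH: "p \<in> HD" using p cball_subset_HD by auto
  have kI: "- 1 / real k \<in> I" using I(2) k by (auto simp: field_simps)
  have "collapsible_moving (chain I \<beta>) (hcopy k p) (chain I \<beta> - ball (hcopy k p) r)"
  proof (rule collapsible_moving_star[OF r hcopy_in_chain[OF k pH], where w = "hcopy k t - hcopy k p"])
    show "closed_segment (hcopy k p) (hcopy k p + (hcopy k t - hcopy k p)) \<subseteq> chain I \<beta>"
    proof -
      have "closed_segment p t \<subseteq> cball 0 1" using p tp by (intro closed_segment_subset) auto
      then show ?thesis using cball_subset_HD hcopy_in_chain[OF k] by (auto simp: closed_segment_hcopy)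
    qed
    show "hcopy k t - hcopy k p \<noteq> 0" using hcopy_inj[OF k, of t p] tp by auto
    fix q assume q: "q \<in> chain I \<beta>" "dist q (hcopy k p) < r"
    then have "dist q (hcopy k p) < plane_gap k" by (simp add: r_def)
    from chain_near_plane[OF k fst_hcopy q(1) this]
    show "closed_segment (hcopy k p) q \<subseteq> chain I \<beta>"
    proof (elim disjE bexE)
      fix p' assume p': "p' \<in> HD" "q = hcopy k p'"
      have "copy_scale k * dist p' p < copy_scale k * (1 - norm p)" using q(2) p' dist_hcopy[OF k] by (simp add: r_def)
      then have "dist p' p < 1 - norm p" using copy_scale_pos[OF k] by simp
      then have "norm p' < 1" using norm_triangle_sub[of p' p] by (simp add: dist_norm)
      then have "closed_segment p p' \<subseteq> cball 0 1" using p by (intro closed_segment_subset) auto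
      then show ?thesis using p' cball_subset_HD hcopy_in_chain[OF k] by (auto simp: closed_segment_hcopy)
    next
      fix x assume x: "x \<in> I" "q = (x, 0)"
      show ?thesis
      proof (cases "p = 0")
        case True
        then show ?thesis using x axis_segment_subset_chain[OF I(1) kI x(1)] by (simp add: hcopy_0)
      next
        case False
        have "dist q (hcopy k p) \<ge> dist (snd q) (snd (hcopy k p))" by (rule dist_snd_le)
        also have "dist (snd q) (snd (hcopy k p)) = copy_scale k * norm p" using x copy_scale_pos[OF k] by (simp add: hcopy_def)
        finally show ?thesis using q(2) False by (simp add: r_def)
      qed
    qed
  qed
  then show ?thesis using collapsible_moving_subset by blast
qed

definition plane_positions :: "real set" where "plane_positions = insert 0 (insert (-2) (range (\<lambda>j. - 1 / real (Suc j))))"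

lemma closed_plane_positions: "closed plane_positions"
proof -
  have "(\<lambda>j. - 1 / real (Suc j)) \<longlonglongrightarrow> - 0"
    using tendsto_minus[OF LIMSEQ_ignore_initial_segment[OF lim_const_over_n[of 1], of 1]] by simp
  then have "compact (insert 0 (range (\<lambda>j. - 1 / real (Suc j))))"
    using compact_sequence_with_limit by simp
  then have "compact (insert (-2) (insert 0 (range (\<lambda>j. - 1 / real (Suc j)))))" by simp
  then show ?thesis unfolding plane_positions_def by (metis compact_imp_closed insert_commute)
qed

lemma plane_position_mem: "k \<ge> 1 \<Longrightarrow> - 1 / real k \<in> plane_positions"
  unfolding plane_positions_def by (rule insertI2, rule insertI2) (auto intro: image_eqI[of _ _ "k - 1"])

lemma collapsible_moving_axis:
  assumes I: "convex I" "{-1..<0} \<subseteq> I" and x: "x0 \<in> I" "x0 \<notin> plane_positions"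
  shows "collapsible_moving (chain I \<beta>) (x0, 0) {}"
proof -
  obtain r where r: "r > 0" "\<forall>z\<in>plane_positions. r \<le> dist x0 z" using separate_point_closed[OF closed_plane_positions x(2)] by blast
  have m1I: "-1 \<in> I" using I(2) by auto
  have m1: "x0 \<noteq> -1" using x(2) plane_position_mem[of 1] by auto
  have "collapsible_moving (chain I \<beta>) (x0, 0) (chain I \<beta> - ball (x0, 0) r)"
  proof (rule collapsible_moving_star[OF r(1) axis_in_chain[OF x(1)], where w = "(-1, 0) - (x0, 0)"])
    show "closed_segment (x0, 0) ((x0, 0) + ((-1, 0) - (x0, 0))) \<subseteq> chain I \<beta>"
      using axis_segment_subset_chain[OF I(1) x(1) m1I] by simp
    show "(-1, 0) - (x0, 0) \<noteq> (0 :: real \<times> real \<times> real)" using m1 by (simp add: zero_prod_def)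
    fix q assume q: "q \<in> chain I \<beta>" "dist q (x0, 0) < r"
    from q(1) show "closed_segment (x0, 0) q \<subseteq> chain I \<beta>"
    proof (cases rule: chain_cases)
      case (1 k p)
      have "\<bar>fst q - x0\<bar> \<ge> r" using r(2) plane_position_mem[OF 1(1)] 1 by (force simp: fst_hcopy dist_real_def)
      then show ?thesis using q(2) abs_fst_diff_le_dist[of q "(x0, 0)"] by simp
    next
      case (2 x)
      then show ?thesis using axis_segment_subset_chain[OF I(1) x(1)] by simp
    next
      case (3 q')
      have "\<bar>fst q - x0\<bar> \<ge> r" using r(2) 3 by (force simp: plane_positions_def dist_real_def)
      then show ?thesis using q(2) abs_fst_diff_le_dist[of q "(x0, 0)"] by simp
    qed
  qed
  then show ?thesis using collapsible_moving_subset by blast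
qed

lemma hair_subset_HD: "e i ` double_broom \<subseteq> HD" unfolding HD_eq by auto

lemma broom_embedding_hair:
  assumes k: "k \<ge> 1"
  shows "broom_embedding (\<lambda>q. hcopy k (e i q)) (chain I \<beta>)"
proof
  show "continuous_on double_broom (\<lambda>q. hcopy k (e i q))"
    by (rule continuous_on_compose2[OF continuous_on_hcopy e_cont]) auto
  show "inj_on (\<lambda>q. hcopy k (e i q)) double_broom"
    using e_inj[of i] hcopy_inj[OF k] unfolding inj_on_def by blast
  show sub: "(\<lambda>q. hcopy k (e i q)) ` double_broom \<subseteq> chain I \<beta>"
    using hair_subset_HD hcopy_in_chain[OF k] by blast
  show "openin (top_of_set (chain I \<beta>)) ((\<lambda>q. hcopy k (e i q)) ` double_broom - {hcopy k (e i (0,0))})"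
    unfolding openin_euclidean_subtopology_iff
  proof (intro conjI ballI)
    show "(\<lambda>q. hcopy k (e i q)) ` double_broom - {hcopy k (e i (0,0))} \<subseteq> chain I \<beta>" using sub by auto
    fix z assume z: "z \<in> (\<lambda>q. hcopy k (e i q)) ` double_broom - {hcopy k (e i (0,0))}"
    then obtain q0 where q0: "q0 \<in> double_broom" "z = hcopy k (e i q0)" by auto
    define x0 where "x0 = e i q0"
    have x0: "x0 \<in> e i ` double_broom" "x0 \<noteq> m i" using q0 z e_v by (auto simp: x0_def)
    obtain \<rho> where \<rho>: "\<rho> > 0" "\<forall>x\<in>HD. dist x x0 < \<rho> \<longrightarrow> x \<in> e i ` double_broom \<and> x \<noteq> m i"
      using HD_locally_hair[OF x0] by blast
    have nx0: "norm x0 \<ge> 1" using hair_norm_ge[OF x0(1)] .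
    define \<epsilon> where "\<epsilon> = min (plane_gap k) (min (copy_scale k * \<rho>) (copy_scale k))"
    have eps: "\<epsilon> > 0" using plane_gap_pos[OF k] copy_scale_pos[OF k] \<rho> by (simp add: \<epsilon>_def)
    have "\<forall>x'\<in>chain I \<beta>. dist x' z < \<epsilon> \<longrightarrow> x' \<in> (\<lambda>q. hcopy k (e i q)) ` double_broom - {hcopy k (e i (0,0))}"
    proof (intro ballI impI)
      fix x' assume x': "x' \<in> chain I \<beta>" "dist x' z < \<epsilon>"
      then have "dist x' z < plane_gap k" by (simp add: \<epsilon>_def)
      from chain_near_plane[OF k _ x'(1) this] q0 fst_hcopy
      consider p' where "p' \<in> HD" "x' = hcopy k p'" | x where "x \<in> I" "x' = (x, 0)" by (auto simp: x0_def)
      then show "x' \<in> (\<lambda>q. hcopy k (e i q)) ` double_broom - {hcopy k (e i (0,0))}"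
      proof cases
        case 1
        have "copy_scale k * dist p' x0 < copy_scale k * \<rho>" using x'(2) 1 q0 dist_hcopy[OF k] by (simp add: \<epsilon>_def x0_def)
        then have "dist p' x0 < \<rho>" using copy_scale_pos[OF k] by simp
        then have "p' \<in> e i ` double_broom" "p' \<noteq> m i" using \<rho>(2) 1(1) by auto
        moreover have "x' \<noteq> hcopy k (e i (0,0))"
          using \<open>p' \<noteq> m i\<close> 1(2) e_v hcopy_inj[OF k, of p' "m i"] by auto
        ultimately show ?thesis using 1 by auto
      next
        case 2
        have "dist x' z \<ge> dist (snd x') (snd z)" by (rule dist_snd_le)
        also have "dist (snd x') (snd z) = copy_scale k * norm x0" using 2 q0 copy_scale_pos[OF k] by (simp add: hcopy_def x0_def)
        also have "copy_scale k * norm x0 \<ge> copy_scale k" using nx0 copy_scale_pos[OF k] by simp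
        finally show ?thesis using x'(2) by (simp add: \<epsilon>_def)
      qed
    qed
    then show "\<exists>\<epsilon>>0. \<forall>x'\<in>chain I \<beta>. dist x' z < \<epsilon> \<longrightarrow> x' \<in> (\<lambda>q. hcopy k (e i q)) ` double_broom - {hcopy k (e i (0,0))}"
      using eps by blast
  qed
qed

lemma broom_embedding_extra:
  assumes b: "\<beta>"
  shows "broom_embedding (\<lambda>q. (-2::real, q)) (chain I \<beta>)"
proof
  show "continuous_on double_broom (\<lambda>q. (-2::real, q))" by (intro continuous_intros)
  show "inj_on (\<lambda>q. (-2::real, q)) double_broom" by (auto simp: inj_on_def)
  show sub: "(\<lambda>q. (-2::real, q)) ` double_broom \<subseteq> chain I \<beta>" using b by (auto simp: chain_def extra_broom_def)
  show "openin (top_of_set (chain I \<beta>)) ((\<lambda>q. (-2::real, q)) ` double_broom - {(-2, (0,0))})"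
    unfolding openin_euclidean_subtopology_iff
  proof (intro conjI ballI)
    show "(\<lambda>q. (-2::real, q)) ` double_broom - {(-2, (0,0))} \<subseteq> chain I \<beta>" using sub by auto
    fix z assume z: "z \<in> (\<lambda>q. (-2::real, q)) ` double_broom - {(-2, (0,0))}"
    then obtain q0 where q0: "q0 \<in> double_broom" "z = (-2, q0)" "q0 \<noteq> (0,0)" by auto
    define \<epsilon> where "\<epsilon> = min 1 (norm q0)"
    have eps: "\<epsilon> > 0" using q0 by (simp add: \<epsilon>_def zero_prod_def)
    have "\<forall>x'\<in>chain I \<beta>. dist x' z < \<epsilon> \<longrightarrow> x' \<in> (\<lambda>q. (-2::real, q)) ` double_broom - {(-2, (0,0))}"
    proof (intro ballI impI)
      fix x' assume x': "x' \<in> chain I \<beta>" "dist x' z < \<epsilon>"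
      from x'(1) show "x' \<in> (\<lambda>q. (-2::real, q)) ` double_broom - {(-2, (0,0))}"
      proof (cases rule: chain_cases)
        case (1 j p)
        have h: "1 / real j \<le> 1" using 1 by simp
        have "fst x' - fst z = 2 - 1 / real j" using 1 q0 by (simp add: fst_hcopy)
        then have "\<bar>fst x' - fst z\<bar> \<ge> 1" using h by linarith
        then show ?thesis using x'(2) abs_fst_diff_le_dist[of x' z] by (simp add: \<epsilon>_def)
      next
        case (2 x)
        have "dist x' z \<ge> dist (snd x') (snd z)" by (rule dist_snd_le)
        then have "dist x' z \<ge> norm q0" using 2 q0 by (simp add: dist_norm)
        then show ?thesis using x'(2) by (simp add: \<epsilon>_def)
      next
        case (3 q')
        have "q' \<noteq> (0,0)"
        proof
          assume "q' = (0,0)"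
          then have "dist x' z = norm q0" using 3 q0 by (simp add: dist_Pair_Pair dist_norm zero_prod_def[symmetric])
          then show False using x'(2) by (simp add: \<epsilon>_def)
        qed
        then show ?thesis using 3 by auto
      qed
    qed
    then show "\<exists>\<epsilon>>0. \<forall>x'\<in>chain I \<beta>. dist x' z < \<epsilon> \<longrightarrow> x' \<in> (\<lambda>q. (-2::real, q)) ` double_broom - {(-2, (0,0))}"
      using eps by blast
  qed
qed

definition copy_circles :: "(real \<times> real \<times> real) set" where "copy_circles = (\<Union>k\<in>{1..}. hcopy k ` sphere 0 1)"
definition extra_center :: "real \<times> real \<times> real" where "extra_center = (-2, 0)"

lemma chain_point_cases:
  assumes I: "convex I" "{-1..<0} \<subseteq> I" and y: "y \<in> chain I \<beta>"
  shows "y \<in> copy_circles \<or> y = extra_center \<or> y = 0 \<or> collapsible_moving (chain I \<beta>) y {}"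
  using y
proof (cases rule: chain_cases)
  case (1 k p)
  from 1(2) consider "norm p < 1" | "norm p = 1" | i where "p \<in> e i ` double_broom" "p \<noteq> m i"
    unfolding HD_eq by (force simp: norm_m)
  then show ?thesis
  proof cases
    case a: 1 then show ?thesis using collapsible_moving_disk[OF I 1(1) a] 1 by simp
  next
    case 2
    then have "y \<in> hcopy k ` sphere 0 1" using 1 by auto
    then show ?thesis using 1(1) unfolding copy_circles_def by blast
  next
    case (3 i)
    then obtain q where q0: "q \<in> double_broom" "p = e i q" by auto
    then have q: "q \<in> double_broom" "p = e i q" "q \<noteq> (0,0)" using 3(2) e_v by auto
    interpret B: broom_embedding "\<lambda>q. hcopy k (e i q)" "chain I \<beta>" by (rule broom_embedding_hair[OF 1(1)])
    show ?thesis using B.collapsible_moving_broom[OF q(1,3)] 1 q by simp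
  qed
next
  case (2 x)
  show ?thesis
  proof (cases "x \<in> plane_positions")
    case False then show ?thesis using collapsible_moving_axis[OF I 2(1) False] 2 by simp
  next
    case True
    then consider "x = 0" | "x = -2" | j where "x = - 1 / real (Suc j)" unfolding plane_positions_def by auto
    then show ?thesis
    proof cases
      case 1 then show ?thesis using 2 by (simp add: zero_prod_def)
    next
      case 2 then show ?thesis using \<open>y = (x, 0)\<close> by (simp add: extra_center_def)
    next
      case (3 j)
      then have "y = hcopy (Suc j) 0" using 2 by (simp add: hcopy_0)
      then show ?thesis using collapsible_moving_disk[OF I, of "Suc j" 0] by simp
    qed
  qed
next
  case (3 q)
  show ?thesis
  proof (cases "q = (0,0)")
    case True then show ?thesis using 3 by (simp add: extra_center_def zero_prod_def)
  next
    case False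
    interpret B: broom_embedding "\<lambda>q. (-2::real, q)" "chain I \<beta>" by (rule broom_embedding_extra[OF 3(1)])
    show ?thesis using B.collapsible_moving_broom[OF 3(2) False] 3 by simp
  qed
qed

lemma copy_circle_in_hf:
  assumes k: "k \<ge> 1" and p: "norm p = 1"
  shows "hcopy k p \<in> hf (chain I \<beta>)"
proof (rule hf_closure_mem)
  have "p \<in> HD" using cball_subset_HD p by auto
  then show "hcopy k p \<in> chain I \<beta>" using hcopy_in_chain[OF k] by blast
  show "range (\<lambda>i. hcopy k (m i)) \<subseteq> hf (chain I \<beta>)"
  proof (rule image_subsetI)
    fix i
    interpret B: broom_embedding "\<lambda>q. hcopy k (e i q)" "chain I \<beta>" by (rule broom_embedding_hair[OF k])
    show "hcopy k (m i) \<in> hf (chain I \<beta>)" using B.center_in_hf e_v by simp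
  qed
  have "p \<in> closure (range m)" using m_dense p by auto
  moreover have "hcopy k ` closure (range m) \<subseteq> closure (range (\<lambda>i. hcopy k (m i)))"
    by (rule image_closure_subset[OF continuous_on_hcopy]) (auto intro: closure_subset[THEN subsetD])
  ultimately show "hcopy k p \<in> closure (range (\<lambda>i. hcopy k (m i)))" by auto
qed

lemma norm_hcopy_1_0_le: "k \<ge> 1 \<Longrightarrow> norm (hcopy k (1,0)) \<le> 2 / real k"
proof -
  assume k: "k \<ge> 1"
  have "norm (hcopy k (1,0)) \<le> norm (- 1 / real k) + norm (copy_scale k *\<^sub>R (1::real, 0::real))"
    unfolding hcopy_def by (rule norm_Pair_le)
  also have "\<dots> = 1 / real k + copy_scale k" using copy_scale_pos[OF k] by simp
  also have "copy_scale k \<le> 1 / real k" using dH_ge k by (simp add: copy_scale_def field_simps)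
  finally show ?thesis by simp
qed

lemma hcopy_1_0_small:
  assumes "\<epsilon> > 0"
  shows "\<exists>k\<ge>1. norm (hcopy k (1,0)) < \<epsilon>"
proof -
  obtain k :: nat where k: "2 / \<epsilon> < real k" using reals_Archimedean2 by blast
  then have k1: "k \<ge> 1" using assms by (cases k) (auto simp: field_simps)
  have "2 / real k < \<epsilon>" using k assms k1 by (simp add: field_simps)
  then show ?thesis using norm_hcopy_1_0_le[OF k1] k1 by (intro exI[of _ k]) auto
qed

lemma zero_in_hf:
  assumes "(0::real \<times> real \<times> real) \<in> chain I \<beta>"
  shows "0 \<in> hf (chain I \<beta>)"
proof (rule hf_closure_mem[OF assms])
  show "{hcopy k (1,0) | k. k \<ge> 1} \<subseteq> hf (chain I \<beta>)" using copy_circle_in_hf by auto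
  show "0 \<in> closure {hcopy k (1,0) | k. k \<ge> 1}"
    unfolding closure_approachable
  proof (intro allI impI)
    fix \<epsilon> :: real assume "\<epsilon> > 0"
    then obtain k where "k \<ge> 1" "norm (hcopy k (1,0)) < \<epsilon>" using hcopy_1_0_small by blast
    then have "hcopy k (1,0) \<in> {hcopy k (1,0) | k. k \<ge> 1}" "dist (hcopy k (1,0)) 0 < \<epsilon>" by auto
    then show "\<exists>y\<in>{hcopy k (1,0) | k. k \<ge> 1}. dist y 0 < \<epsilon>" by blast
  qed
qed

lemma copy_circle_islimpt_hf:
  assumes k: "k \<ge> 1" and p: "norm p = 1"
  shows "hcopy k p islimpt hf (chain I \<beta>)"
proof -
  have "connected (sphere (0::real \<times> real) 1)" by (rule connected_sphere) simp
  moreover have "sphere (0::real \<times> real) 1 \<noteq> {x}" for x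
  proof
    assume "sphere (0::real \<times> real) 1 = {x}"
    moreover have "(1,0) \<in> sphere (0::real \<times> real) 1" "(-1,0) \<in> sphere (0::real \<times> real) 1"
      by (simp_all add: norm_Pair)
    ultimately have "(1::real,0::real) = x" "(-1::real,0::real) = x" by blast+
    then show False by (metis fst_conv one_neq_neg_one)
  qed
  ultimately have pl: "p islimpt sphere 0 1" using p by (intro connected_imp_perfect) auto
  show ?thesis unfolding islimpt_def
  proof (intro allI impI)
    fix T assume T: "hcopy k p \<in> T" "open T"
    have "open (hcopy k -` T)" using T(2) continuous_on_hcopy[of UNIV k] by (simp add: continuous_on_open_vimage)
    moreover have "p \<in> hcopy k -` T" using T(1) by simp
    ultimately obtain p' where p': "p' \<in> sphere 0 1" "p' \<in> hcopy k -` T" "p' \<noteq> p"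
      using pl unfolding islimpt_def by blast
    have "hcopy k p' \<in> hf (chain I \<beta>)" using copy_circle_in_hf[OF k] p' by simp
    moreover have "hcopy k p' \<noteq> hcopy k p" using hcopy_inj[OF k] p' by blast
    ultimately show "\<exists>y\<in>hf (chain I \<beta>). y \<in> T \<and> y \<noteq> hcopy k p" using p' by auto
  qed
qed

lemma zero_islimpt_hf:
  shows "(0::real \<times> real \<times> real) islimpt hf (chain I \<beta>)"
  unfolding islimpt_def
proof (intro allI impI)
  fix T :: "(real \<times> real \<times> real) set" assume T: "0 \<in> T" "open T"
  then obtain \<epsilon> where eps: "\<epsilon> > 0" "ball 0 \<epsilon> \<subseteq> T" using open_contains_ball by blast
  obtain k where k: "k \<ge> 1" "norm (hcopy k (1,0)) < \<epsilon>" using hcopy_1_0_small[OF eps(1)] by blast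
  have "hcopy k (1,0) \<in> hf (chain I \<beta>)" using copy_circle_in_hf[OF k(1)] by simp
  moreover have "hcopy k (1,0) \<in> T" using k eps by (auto simp: dist_norm)
  moreover have "hcopy k (1,0) \<noteq> 0" using k by (simp add: hcopy_def zero_prod_def)
  ultimately show "\<exists>y\<in>hf (chain I \<beta>). y \<in> T \<and> y \<noteq> 0" by blast
qed

lemma extra_center_in_chain: "extra_center \<in> chain I \<beta> \<Longrightarrow> (-2 \<in> I \<longleftrightarrow> \<beta>) \<Longrightarrow> \<beta>"
proof -
  assume a: "extra_center \<in> chain I \<beta>" and b: "-2 \<in> I \<longleftrightarrow> \<beta>"
  from a show ?thesis
  proof (cases rule: chain_cases)
    case (1 k p)
    then have "- 1 / real k = -2" by (simp add: extra_center_def hcopy_def)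
    moreover have "1 / real k \<le> 1" using 1 by simp
    ultimately show ?thesis by linarith
  next
    case (2 x) then show ?thesis using b by (simp add: extra_center_def)
  qed auto
qed

lemma chain_hf_special_points:
  assumes b: "-2 \<in> I \<longleftrightarrow> \<beta>" and y: "y \<in> chain I \<beta>" "y \<in> copy_circles \<or> y = extra_center \<or> y = 0"
  shows "y \<in> hf (chain I \<beta>)"
proof -
  consider "y \<in> copy_circles" | "y = extra_center" | "y = 0" using y(2) by blast
  then show ?thesis
  proof cases
    case 1 then show ?thesis using copy_circle_in_hf unfolding copy_circles_def by auto
  next
    case 2
    then have \<beta> using extra_center_in_chain b y(1) by blast
    interpret B: broom_embedding "\<lambda>q. (-2::real, q)" "chain I \<beta>"
      by (rule broom_embedding_extra[OF \<open>\<beta>\<close>])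
    show ?thesis using B.center_in_hf 2 by (simp add: extra_center_def zero_prod_def)
  next
    case 3 then show ?thesis using zero_in_hf y(1) by simp
  qed
qed

lemma chain_locally_collapsible:
  assumes I: "convex I" "{-1..<0} \<subseteq> I" and b: "-2 \<in> I \<longleftrightarrow> \<beta>"
    and y: "y \<in> chain I \<beta> - hf (chain I \<beta>)"
  shows "locally_collapsible (chain I \<beta>) y"
  using chain_point_cases[OF I, of y \<beta>] chain_hf_special_points[OF b, of y] y
    collapsible_moving_imp_locally_collapsible by blast

lemma chain_hf_islimpt_or_not_collapsible_onto:
  assumes I: "convex I" "{-1..<0} \<subseteq> I" and b: "-2 \<in> I \<longleftrightarrow> \<beta>" and y: "y \<in> hf (chain I \<beta>)"
  shows "y islimpt hf (chain I \<beta>) \<or> \<not> collapsible_onto (chain I \<beta>) y"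
proof -
  have "y \<in> chain I \<beta>" "\<not> collapsible_moving (chain I \<beta>) y {}"
    using y hf_subset collapsible_moving_not_hf by blast+
  then consider "y \<in> copy_circles" | "y = 0" | "y = extra_center"
    using chain_point_cases[OF I] by blast
  then show ?thesis
  proof cases
    case 3
    then have \<beta> using extra_center_in_chain b y hf_subset by blast
    interpret B: broom_embedding "\<lambda>q. (-2::real, q)" "chain I \<beta>"
      by (rule broom_embedding_extra[OF \<open>\<beta>\<close>])
    show ?thesis using B.center_not_collapsible_onto 3 by (simp add: extra_center_def zero_prod_def)
  qed (use copy_circle_islimpt_hf zero_islimpt_hf in \<open>auto simp: copy_circles_def\<close>)
qed

lemma chain_homotopy_equivalence_hf:
  assumes I: "convex I" "{-1..<0} \<subseteq> I" "-2 \<in> I \<longleftrightarrow> \<beta>"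
    and J: "convex J" "{-1..<0} \<subseteq> J" "-2 \<in> J \<longleftrightarrow> \<gamma>"
    and he: "homotopy_equivalence_pair (chain I \<beta>) (chain J \<gamma>) f g"
  shows "f ` hf (chain I \<beta>) \<subseteq> hf (chain J \<gamma>) \<and> g ` hf (chain J \<gamma>) \<subseteq> hf (chain I \<beta>)"
proof
  show "f ` hf (chain I \<beta>) \<subseteq> hf (chain J \<gamma>)"
    using homotopy_equivalence_pair_hf_image[OF he] chain_locally_collapsible[OF J]
      chain_hf_islimpt_or_not_collapsible_onto[OF I] by blast
  show "g ` hf (chain J \<gamma>) \<subseteq> hf (chain I \<beta>)"
    using homotopy_equivalence_pair_hf_image[OF homotopy_equivalence_pair_sym[OF he]]
      chain_locally_collapsible[OF I] chain_hf_islimpt_or_not_collapsible_onto[OF J] by blast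
qed

lemma WHo_eq_chain: "WHo HD = chain {-1..<0} False"
  unfolding WHo_def chain_def copyH_eq_hcopy axis_segments_union by simp

lemma axis_Un: "axis A \<union> axis B = axis (A \<union> B)" unfolding axis_def by auto

lemma WBHo_eq_chain: "WBHo HD = chain {-2..<0} True"
proof -
  have e1: "(\<lambda>p. (-2::real, fst p, snd p)) ` double_broom = extra_broom" unfolding extra_broom_def by simp
  have e2: "closed_segment (-2::real, 0::real, 0::real) (cpt 1) = axis {-2..-1}"
    using closed_segment_axis[of "-2" "-1"] by (simp add: cpt_def zero_prod_def closed_segment_eq_real_ivl)
  have e3: "{-2..-1} \<union> {-1..<0} = {-2..<(0::real)}" by auto
  show ?thesis unfolding WBHo_def WHo_eq_chain e1 e2 chain_def
    using axis_Un[of "{-2..-1}" "{-1..<0}"] e3 by auto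
qed

lemma insert_0_axis: "insert (0::real \<times> real \<times> real) (axis {a..<0}) = axis {a..0}" if "a \<le> 0"
  using that unfolding axis_def by (auto simp: zero_prod_def)

lemma WH_eq_chain: "WH HD = chain {-1..0} False"
  unfolding WH_def WHo_eq_chain chain_def using insert_0_axis[of "-1"] by auto

lemma WBH_eq_chain: "WBH HD = chain {-2..0} True"
  unfolding WBH_def WBHo_eq_chain chain_def using insert_0_axis[of "-2"] by auto

end

theorem lemma3p7:
  fixes m :: "nat \<Rightarrow> real \<times> real" and e :: "nat \<Rightarrow> real \<times> real \<Rightarrow> real \<times> real"
  assumes "hairy_disk_data m e"
  shows "(\<forall>f g. homotopy_equivalence_pair (WHo (hairy_disk m e)) (WBHo (hairy_disk m e)) f g \<longrightarrow>
            f ` hf (WHo (hairy_disk m e)) \<subseteq> hf (WBHo (hairy_disk m e)) \<and>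
            g ` hf (WBHo (hairy_disk m e)) \<subseteq> hf (WHo (hairy_disk m e))) \<and>
         (\<forall>f g. homotopy_equivalence_pair (WH (hairy_disk m e)) (WBH (hairy_disk m e)) f g \<longrightarrow>
            f ` hf (WH (hairy_disk m e)) \<subseteq> hf (WBH (hairy_disk m e)) \<and>
            g ` hf (WBH (hairy_disk m e)) \<subseteq> hf (WH (hairy_disk m e)))"
proof -
  interpret hairy_disk_setting m e by (rule hairy_disk_setting.intro[OF assms])
  show ?thesis
    unfolding HD_def[symmetric] WHo_eq_chain WBHo_eq_chain WH_eq_chain WBH_eq_chain
    by (rule conjI; intro allI impI; rule chain_homotopy_equivalence_hf)
      (auto simp: convex_real_interval)
qed

end
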